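(* Let $f:\mathbb{R}^n\times\mathbb{R}_+\to\mathbb{R}$ be thrice continuously differentiable with $\nabla_{\mathbf{x}\mathbf{x}} f(\mathbf{x},t)\succeq m\mathbf{I}_n$ for some $m>0$ and all $(\mathbf{x},t)$, and suppose that for all $\mathbf{x},t$ and $i\in\{1,\dots,n\}$: $\|\nabla_{\mathbf{x}\mathbf{x}} f\|_2\le C_{xx}$, $\|\nabla_{\mathbf{x}t} f\|_2\le C_{xt}$, $\|\nabla_{\mathbf{x}\mathbf{x}t} f\|_2\le C_{xxt}$, $\|\nabla_{\mathbf{x}tt} f\|_2\le C_{xtt}$, $\|\nabla_{\mathbf{x}\mathbf{x}\mathbf{x}_i} f\|_2\le C_{xxx}$ for given positive constants. Fix $\alpha>0$, $t_0=0$ and $\mathbf{x}_0\in\mathbb{R}^n$. Construct recursively, for $k=0,1,2,\dots$: $\dot{\mathbf{x}}_k=-\nabla_{\mathbf{x}\mathbf{x}}^{-1} f(\mathbf{x}_k,t_k)[\alpha\nabla_{\mathbf{x}} f(\mathbf{x}_k,t_k)+\nabla_{\mathbf{x}t} f(\mathbf{x}_k,t_k)]$; $\mathbf{x}(t)=\mathbf{x}_k+\dot{\mathbf{x}}_k(t-t_k)$ for $t\in[t_k,t_{k+1}]$; $V(t)=\tfrac12\|\nabla_{\mathbf{x}} f(\mathbf{x}(t),t)\|_2^2$; $t_{k+1}$ is the smallest $t>t_k$ with $\phi_k(t)=0$; and $\mathbf{x}_{k+1}=\mathbf{x}_k+\dot{\mathbf{x}}_k(t_{k+1}-t_k)$.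 Here $\phi_k$ is either (for all $k$) $$\phi_k(t)=\tfrac12 a_kb_k(t-t_k)^2+\big(a_k^2+b_k\sqrt{2V(t_k)}\big)(t-t_k)-2\alpha V(t_k)$$ or (for all $k$) $$\phi_k(t)=\tfrac12 b_k^2(t-t_k)^3+\tfrac32\alpha\sqrt{2V(t_k)}\,b_k(t-t_k)^2+\big(\sqrt{2V(t_k)}\,b_k+2\alpha^2V(t_k)\big)(t-t_k)-2\alpha V(t_k),$$ with $a_k=C_{xx}\|\dot{\mathbf{x}}_k\|_2+C_{xt}$ and $b_k=(C_{xxx}\|\dot{\mathbf{x}}_k\|_1+2C_{xxt})\|\dot{\mathbf{x}}_k\|_2+C_{xtt}$. Assume $V(t_k)>0$ for every $k$ (so that each $t_{k+1}$ is well defined). Then $V(t_{k+1})<V(t_k)$ for every $k\in\mathbb{Z}_+$, and $\lim_{k\to\infty}V(t_k)=0$.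
   Context: $\nabla_{\mathbf{x}} f$ is the gradient in $\mathbf{x}$, $\nabla_{\mathbf{x}\mathbf{x}} f$ the Hessian in $\mathbf{x}$, $\nabla_{\mathbf{x}t} f=\frac{\partial}{\partial t}\nabla_{\mathbf{x}} f$, $\nabla_{\mathbf{x}\mathbf{x}t} f=\frac{\partial}{\partial t}\nabla_{\mathbf{x}\mathbf{x}} f$, $\nabla_{\mathbf{x}tt} f=\frac{\partial^2}{\partial t^2}\nabla_{\mathbf{x}} f$, $\nabla_{\mathbf{x}\mathbf{x}\mathbf{x}_i} f=\frac{\partial}{\partial \mathbf{x}_i}\nabla_{\mathbf{x}\mathbf{x}} f$. Matrix norms are spectral norms; $\|\cdot\|_1$ is the vector one-norm. When the cubic choice of $\phi_k$ is used, only the constants $C_{xxx},C_{xxt},C_{xtt}$ enter. *)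

theory Defs
  imports "HOL-Analysis.Analysis"
begin

text \<open>Functions f(x,t) on R^n x R_+ are represented curried, f :: real^'n => real => real,
  and only considered for t >= 0. A direction is Some i (partial in x_i) or None (partial in t).
  The t-partial is taken within {0..}, i.e. one-sided at t = 0.\<close>

definition pd :: "'n option \<Rightarrow> (real^'n \<Rightarrow> real \<Rightarrow> real) \<Rightarrow> real^'n \<Rightarrow> real \<Rightarrow> real" where
  "pd d g x t = (case d of
      Some i \<Rightarrow> vector_derivative (\<lambda>s. g (x + s *\<^sub>R axis i 1) t) (at 0)
    | None \<Rightarrow> vector_derivative (\<lambda>s. g x s) (at t within {0..}))"

definition has_pd :: "'n option \<Rightarrow> (real^'n \<Rightarrow> real \<Rightarrow> real) \<Rightarrow> real^'n \<Rightarrow> real \<Rightarrow> bool" where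
  "has_pd d g x t = (case d of
      Some i \<Rightarrow> (\<lambda>s. g (x + s *\<^sub>R axis i 1) t) differentiable (at 0)
    | None \<Rightarrow> (\<lambda>s. g x s) differentiable (at t within {0..}))"

definition C3_time :: "(real^'n \<Rightarrow> real \<Rightarrow> real) \<Rightarrow> bool" where
  "C3_time f \<longleftrightarrow>
     (\<forall>ds. length ds \<le> 3 \<longrightarrow>
        continuous_on (UNIV \<times> {0..}) (\<lambda>(x,t). foldr pd ds f x t)) \<and>
     (\<forall>ds. length ds < 3 \<longrightarrow> (\<forall>d x t. 0 \<le> t \<longrightarrow> has_pd d (foldr pd ds f) x t))"

definition grad_x :: "(real^'n \<Rightarrow> real \<Rightarrow> real) \<Rightarrow> real^'n \<Rightarrow> real \<Rightarrow> real^'n" where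
  "grad_x f x t = (\<chi> i. pd (Some i) f x t)"

definition hess_xx :: "(real^'n \<Rightarrow> real \<Rightarrow> real) \<Rightarrow> real^'n \<Rightarrow> real \<Rightarrow> real^'n^'n" where
  "hess_xx f x t = (\<chi> i j. pd (Some j) (pd (Some i) f) x t)"

definition grad_xt :: "(real^'n \<Rightarrow> real \<Rightarrow> real) \<Rightarrow> real^'n \<Rightarrow> real \<Rightarrow> real^'n" where
  "grad_xt f x t = (\<chi> i. pd None (pd (Some i) f) x t)"

definition grad_xtt :: "(real^'n \<Rightarrow> real \<Rightarrow> real) \<Rightarrow> real^'n \<Rightarrow> real \<Rightarrow> real^'n" where
  "grad_xtt f x t = (\<chi> i. pd None (pd None (pd (Some i) f)) x t)"

definition hess_xxt :: "(real^'n \<Rightarrow> real \<Rightarrow> real) \<Rightarrow> real^'n \<Rightarrow> real \<Rightarrow> real^'n^'n" where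
  "hess_xxt f x t = (\<chi> i j. pd None (pd (Some j) (pd (Some i) f)) x t)"

definition hess_xxx :: "(real^'n \<Rightarrow> real \<Rightarrow> real) \<Rightarrow> 'n \<Rightarrow> real^'n \<Rightarrow> real \<Rightarrow> real^'n^'n" where
  "hess_xxx f k x t = (\<chi> i j. pd (Some k) (pd (Some j) (pd (Some i) f)) x t)"

definition spec_norm :: "real^'n^'m \<Rightarrow> real" where
  "spec_norm A = onorm (\<lambda>v. A *v v)"

definition norm1 :: "real^'n \<Rightarrow> real" where
  "norm1 v = (\<Sum>i\<in>UNIV. \<bar>v $ i\<bar>)"

definition psd :: "real^'n^'n \<Rightarrow> bool" where
  "psd A \<longleftrightarrow> (\<forall>v. 0 \<le> v \<bullet> (A *v v))"

definition xdot :: "(real^'n \<Rightarrow> real \<Rightarrow> real) \<Rightarrow> real \<Rightarrow> real^'n \<Rightarrow> real \<Rightarrow> real^'n" where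
  "xdot f \<alpha> x t = - (matrix_inv (hess_xx f x t) *v (\<alpha> *\<^sub>R grad_x f x t + grad_xt f x t))"

definition Vf :: "(real^'n \<Rightarrow> real \<Rightarrow> real) \<Rightarrow> real^'n \<Rightarrow> real \<Rightarrow> real" where
  "Vf f x t = 1/2 * (norm (grad_x f x t))^2"

definition traj :: "(real^'n \<Rightarrow> real \<Rightarrow> real) \<Rightarrow> real \<Rightarrow> real^'n \<Rightarrow> real \<Rightarrow> real \<Rightarrow> real^'n" where
  "traj f \<alpha> xk tk t = xk + (t - tk) *\<^sub>R xdot f \<alpha> xk tk"

definition Vtraj :: "(real^'n \<Rightarrow> real \<Rightarrow> real) \<Rightarrow> real \<Rightarrow> real^'n \<Rightarrow> real \<Rightarrow> real \<Rightarrow> real" where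
  "Vtraj f \<alpha> xk tk t = Vf f (traj f \<alpha> xk tk t) t"

definition phi :: "bool \<Rightarrow> real \<Rightarrow> real \<Rightarrow> real \<Rightarrow> real \<Rightarrow> real \<Rightarrow> real \<Rightarrow>
    (real^'n \<Rightarrow> real \<Rightarrow> real) \<Rightarrow> real^'n \<Rightarrow> real \<Rightarrow> real \<Rightarrow> real" where
  "phi cubic Cxx Cxt Cxxx Cxxt Cxtt \<alpha> f xk tk t =
    (let xd = xdot f \<alpha> xk tk;
         V0 = Vtraj f \<alpha> xk tk tk;
         a = Cxx * norm xd + Cxt;
         b = (Cxxx * norm1 xd + 2 * Cxxt) * norm xd + Cxtt;
         s = t - tk
     in if cubic then
          1/2 * b^2 * s^3 + 3/2 * \<alpha> * sqrt (2 * V0) * b * s^2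
          + (sqrt (2 * V0) * b + 2 * \<alpha>^2 * V0) * s - 2 * \<alpha> * V0
        else
          1/2 * a * b * s^2 + (a^2 + b * sqrt (2 * V0)) * s - 2 * \<alpha> * V0)"

end

theory Submission
  imports Defs
begin

text \<open>
  Along the $k$-th linear piece put $G(t) = \nabla_x f(x(t),t)$, so $V = \frac12\|G\|^2$. The
  choice of $\dot{x}_k$ makes $G'(t_k) = -\alpha G(t_k)$, and the derivative bounds give
  $\|G'\| \le a_k$ and $\|G''\| \le b_k$ on the piece. A first-order Taylor estimate,
  respectively the energy estimate $\frac{d}{dt}\frac12\|G\|^2 = G\cdot G'$, bounds $V(t)$ by
  a polynomial in $t - t_k$ which, at the first positive root $t_{k+1}$ of $\phi_k$, is at most
  $V(t_k) - \alpha^2 V(t_k)(t_{k+1}-t_k)^2$, respectively $V(t_k) - \frac12 a_k b_k (t_{k+1}-t_k)^3$. Strong convexity bounds $\|\dot{x}_k\|$ in terms of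
  $V(t_k)$, hence the coefficients of $\phi_k$; so as long as $V(t_k)$ stays in a band
  $[r, V(t_0)]$ with $r > 0$, the steps $t_{k+1} - t_k$ and the decreases of $V$ are bounded
  below uniformly, which forces $V(t_k) \to 0$.
\<close>

section \<open>Estimates for curves\<close>

lemma MVT_within_atLeast:
  fixes F :: "real \<Rightarrow> real"
  assumes "a < b" and d: "\<And>u. a \<le> u \<Longrightarrow> u \<le> b \<Longrightarrow> (F has_real_derivative F' u) (at u within {a..})"
  shows "\<exists>z. a < z \<and> z < b \<and> F b - F a = (b - a) * F' z"
proof -
  have c: "continuous_on {a..b} F"
    unfolding continuous_on_eq_continuous_within
  proof
    fix u assume "u \<in> {a..b}"
    then have "continuous (at u within {a..}) F" by (intro DERIV_continuous[OF d]) auto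
    then show "continuous (at u within {a..b}) F"
      by (rule continuous_within_subset) auto
  qed
  have da: "(F has_real_derivative F' u) (at u)" if "a < u" "u < b" for u
  proof -
    have "at u within {a..} = at u"
      by (rule at_within_interior) (use that in auto)
    then show ?thesis using d[of u] that by simp
  qed
  obtain l z where z: "a < z" "z < b" "DERIV F z :> l" "F b - F a = (b - a) * l"
    using MVT[OF assms(1) c] da real_differentiable_def by blast
  then have "l = F' z" using da[of z] DERIV_unique by blast
  then show ?thesis using z by blast
qed

lemma norm_diff_le_of_vector_derivative_bound:
  fixes F :: "real \<Rightarrow> 'b::real_normed_vector"
  assumes "convex S" "a \<in> S" "b \<in> S"
    and d: "\<And>x. x \<in> S \<Longrightarrow> (F has_vector_derivative F' x) (at x within S)"
    and B: "\<And>x. x \<in> S \<Longrightarrow> norm (F' x) \<le> B"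
  shows "norm (F b - F a) \<le> B * \<bar>b - a\<bar>"
proof -
  have "norm (F b - F a) \<le> B * norm (b - a)"
  proof (rule differentiable_bound[of S F "\<lambda>x h. h *\<^sub>R F' x" B])
    show "(F has_derivative (\<lambda>h. h *\<^sub>R F' x)) (at x within S)" if "x \<in> S" for x
      using d[OF that] unfolding has_vector_derivative_def .
    show "onorm (\<lambda>h. h *\<^sub>R F' x) \<le> B" if "x \<in> S" for x
      using onorm_scaleR_left[OF bounded_linear_ident, of "F' x"] B[OF that] by (simp add: onorm_id)
  qed (use assms in auto)
  then show ?thesis by simp
qed

lemma norm_first_order_remainder_le:
  fixes G :: "real \<Rightarrow> 'b::real_normed_vector"
  assumes s: "0 < s"
    and dG: "\<And>u. a \<le> u \<Longrightarrow> (G has_vector_derivative G' u) (at u within {a..})"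
    and dG': "\<And>u. a \<le> u \<Longrightarrow> (G' has_vector_derivative G'' u) (at u within {a..})"
    and bnd: "\<And>u. a \<le> u \<Longrightarrow> norm (G'' u) \<le> b"
  shows "norm (G (a + s) - G a - s *\<^sub>R G' a) \<le> b * s\<^sup>2"
proof -
  have b0: "0 \<le> b" using bnd[of a] norm_ge_zero order_trans by blast
  have "norm (G (a + s) - G a - ((a + s) - a) *\<^sub>R G' a) \<le> norm ((a + s) - a) * (b * s)"
  proof (rule vector_differentiable_bound_linearization[where S="{a..a+s}"])
    fix x assume x: "x \<in> {a..a+s}"
    show "(G has_vector_derivative G' x) (at x within {a..a+s})"
      by (rule has_vector_derivative_within_subset[OF dG]) (use x in auto)
    have "norm (G' x - G' a) \<le> b * \<bar>x - a\<bar>"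
    proof (rule norm_diff_le_of_vector_derivative_bound[where S="{a..x}"])
      fix y assume "y \<in> {a..x}"
      then show "(G' has_vector_derivative G'' y) (at y within {a..x})" "norm (G'' y) \<le> b"
        using x by (auto intro: has_vector_derivative_within_subset[OF dG'] bnd)
    qed (use x in auto)
    also have "\<dots> \<le> b * s" using x b0 by (intro mult_left_mono) auto
    finally show "norm (G' x - G' a) \<le> b * s" .
  qed (use s closed_segment_eq_real_ivl in auto)
  then show ?thesis using s by (simp add: power2_eq_square mult_ac)
qed

lemma inner_vector_derivative_le:
  fixes G :: "real \<Rightarrow> 'b::real_inner"
  assumes dG: "\<And>u. a \<le> u \<Longrightarrow> (G has_vector_derivative G' u) (at u within {a..})"
    and bnd: "\<And>u. a \<le> u \<Longrightarrow> norm (G' u) \<le> A"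
    and lip: "\<And>u. a \<le> u \<Longrightarrow> norm (G' u - G' a) \<le> B * (u - a)"
    and u: "a \<le> u"
  shows "G u \<bullet> G' u \<le> G a \<bullet> G' a + (norm (G a) * B + A\<^sup>2) * (u - a)"
proof -
  have "norm (G u - G a) \<le> A * \<bar>u - a\<bar>"
    by (rule norm_diff_le_of_vector_derivative_bound[where S="{a..u}"])
       (use u in \<open>auto intro: has_vector_derivative_within_subset[OF dG] bnd\<close>)
  then have "norm (G u - G a) * norm (G' u) \<le> (A * (u - a)) * A"
    using bnd[OF u] u by (intro mult_mono) (auto intro: order_trans[OF norm_ge_zero])
  then have "(G u - G a) \<bullet> G' u \<le> (A * (u - a)) * A"
    using norm_cauchy_schwarz[of "G u - G a" "G' u"] by linarith
  moreover have "G a \<bullet> (G' u - G' a) \<le> norm (G a) * (B * (u - a))"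
    using norm_cauchy_schwarz[of "G a" "G' u - G' a"] mult_left_mono[OF lip[OF u] norm_ge_zero[of "G a"]]
    by linarith
  moreover have "G u \<bullet> G' u = G a \<bullet> G' a + G a \<bullet> (G' u - G' a) + (G u - G a) \<bullet> G' u"
    by (simp add: algebra_simps)
  moreover have "norm (G a) * (B * (u - a)) + (A * (u - a)) * A = (norm (G a) * B + A\<^sup>2) * (u - a)"
    by (simp add: algebra_simps power2_eq_square)
  ultimately show ?thesis by linarith
qed

text \<open>The proof shows that $\frac12\|G(u)\|^2 - (G(a)\cdot G'(a))(u-a) - K(u-a)^2$, with
  $K = \|G(a)\|B + A^2$, is non-increasing.\<close>
lemma half_norm_sq_le_of_derivative_bounds:
  fixes G :: "real \<Rightarrow> 'b::real_inner"
  assumes s: "0 < s"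
    and dG: "\<And>u. a \<le> u \<Longrightarrow> (G has_vector_derivative G' u) (at u within {a..})"
    and bnd: "\<And>u. a \<le> u \<Longrightarrow> norm (G' u) \<le> A"
    and lip: "\<And>u. a \<le> u \<Longrightarrow> norm (G' u - G' a) \<le> B * (u - a)"
  shows "(norm (G (a + s)))\<^sup>2 / 2 \<le> (norm (G a))\<^sup>2 / 2 + (G a \<bullet> G' a) * s
           + (norm (G a) * B + A\<^sup>2) * s\<^sup>2"
proof -
  define K where "K = norm (G a) * B + A\<^sup>2"
  have "0 \<le> B" using order_trans[OF norm_ge_zero lip[of "a + 1"]] by simp
  then have K0: "0 \<le> K" unfolding K_def by simp
  define Z where "Z = (\<lambda>u. 1/2 * (G u \<bullet> G u) - (G a \<bullet> G' a) * (u - a) - K * ((u - a) * (u - a)))"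
  define Z' where "Z' = (\<lambda>u. G u \<bullet> G' u - G a \<bullet> G' a - 2 * K * (u - a))"
  have "(Z has_real_derivative Z' u) (at u within {a..})" if "a \<le> u" for u
  proof -
    have "((\<lambda>u. G u \<bullet> G u) has_vector_derivative (G u \<bullet> G' u + G' u \<bullet> G u)) (at u within {a..})"
      by (rule bounded_bilinear.has_vector_derivative[OF bounded_bilinear_inner dG[OF that] dG[OF that]])
    then have "((\<lambda>u. G u \<bullet> G u) has_real_derivative (G u \<bullet> G' u + G' u \<bullet> G u)) (at u within {a..})"
      by (simp add: has_real_derivative_iff_has_vector_derivative)
    then show ?thesis unfolding Z_def Z'_def
      by (auto intro!: derivative_eq_intros simp: inner_commute algebra_simps)
  qed
  moreover have "Z' u \<le> 0" if "a \<le> u" for u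
  proof -
    have "0 \<le> K * (u - a)" using K0 that by simp
    then show ?thesis
      using inner_vector_derivative_le[OF dG bnd lip that] unfolding Z'_def K_def[symmetric] by linarith
  qed
  ultimately obtain z where z: "a < z" "z < a + s" "Z (a + s) - Z a = s * Z' z" "Z' z \<le> 0"
    using MVT_within_atLeast[of a "a + s" Z Z'] s by force
  moreover have "s * Z' z \<le> 0" using z(4) s by (simp add: mult_nonneg_nonpos)
  ultimately have "Z (a + s) \<le> Z a" by simp
  then show ?thesis unfolding Z_def K_def
    by (simp add: power2_norm_eq_inner[symmetric] power2_eq_square)
qed

section \<open>Partial derivatives in space and time\<close>

lemma pd_axis_has_real_derivative:
  fixes h :: "real^'n \<Rightarrow> real \<Rightarrow> real"
  assumes "\<And>s. has_pd (Some j) h (y + s *\<^sub>R axis j 1) t"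
  shows "((\<lambda>s. h (y + s *\<^sub>R axis j 1) t) has_real_derivative
           pd (Some j) h (y + s0 *\<^sub>R axis j 1) t) (at s0)"
proof -
  let ?y = "y + s0 *\<^sub>R axis j 1"
  have "(\<lambda>s. h (?y + s *\<^sub>R axis j 1) t) differentiable (at 0)"
    using assms[of s0] by (simp add: has_pd_def)
  then have "((\<lambda>s. h (?y + s *\<^sub>R axis j 1) t) has_real_derivative pd (Some j) h ?y t) (at 0)"
    unfolding pd_def
    by (simp add: vector_derivative_works has_real_derivative_iff_has_vector_derivative)
  moreover have "(\<lambda>s. h (y + (s + s0) *\<^sub>R axis j 1) t) = (\<lambda>s. h (?y + s *\<^sub>R axis j 1) t)"
    by (simp add: algebra_simps scaleR_add_left)
  ultimately have "((\<lambda>s. h (y + s *\<^sub>R axis j 1) t) has_real_derivative pd (Some j) h ?y t) (at (0 + s0))"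
    unfolding DERIV_shift by simp
  then show ?thesis by simp
qed

lemma pd_time_has_real_derivative:
  assumes "has_pd None h x t" "0 \<le> t0"
  shows "((\<lambda>s. h x s) has_real_derivative pd None h x t) (at t within {t0..})"
proof -
  have "((\<lambda>s. h x s) has_real_derivative pd None h x t) (at t within {0..})"
    using assms(1) unfolding pd_def has_pd_def
    by (simp add: vector_derivative_works has_real_derivative_iff_has_vector_derivative)
  then show ?thesis by (rule DERIV_subset) (use assms(2) in auto)
qed

lemma axis_increment_le:
  fixes h :: "real^'n \<Rightarrow> real \<Rightarrow> real"
  assumes ex: "\<And>s. has_pd (Some j) h (y + s *\<^sub>R axis j 1) t"
    and bnd: "\<And>s. \<bar>s\<bar> \<le> \<bar>w\<bar> \<Longrightarrow> \<bar>pd (Some j) h (y + s *\<^sub>R axis j 1) t - c\<bar> \<le> \<epsilon>"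
  shows "\<bar>h (y + w *\<^sub>R axis j 1) t - h y t - w * c\<bar> \<le> \<epsilon> * \<bar>w\<bar>"
proof -
  define F where "F = (\<lambda>s. h (y + s *\<^sub>R axis j 1) t - c * s)"
  define F' where "F' = (\<lambda>s. pd (Some j) h (y + s *\<^sub>R axis j 1) t - c)"
  have "norm (F w - F 0) \<le> \<epsilon> * \<bar>w - 0\<bar>"
  proof (rule norm_diff_le_of_vector_derivative_bound[where S="closed_segment 0 w"])
    fix s assume s: "s \<in> closed_segment 0 w"
    have "(F has_real_derivative F' s) (at s)"
      unfolding F_def F'_def by (intro DERIV_diff pd_axis_has_real_derivative[OF ex] DERIV_cmult_Id)
    then show "(F has_vector_derivative F' s) (at s within closed_segment 0 w)"
      by (simp add: has_real_derivative_iff_has_vector_derivative has_vector_derivative_at_within)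
    have "\<bar>s\<bar> \<le> \<bar>w\<bar>" using s by (auto simp: closed_segment_eq_real_ivl split: if_splits)
    then show "norm (F' s) \<le> \<epsilon>" unfolding F'_def using bnd by simp
  qed auto
  then show ?thesis unfolding F_def by (simp add: mult.commute)
qed

definition restrict_coords :: "'n set \<Rightarrow> real^'n \<Rightarrow> real^'n" where
  "restrict_coords S w = (\<chi> i. if i \<in> S then w$i else 0)"

lemma increment_le_of_partials_close:
  fixes h :: "real^'n \<Rightarrow> real \<Rightarrow> real"
  assumes ex: "\<And>i y. has_pd (Some i) h y t"
    and close: "\<And>i y. norm (y - x) \<le> norm w \<Longrightarrow> \<bar>pd (Some i) h y t - c i\<bar> \<le> \<epsilon>"
  shows "\<bar>h (x + w) t - h x t - (\<Sum>i\<in>UNIV. w$i * c i)\<bar> \<le> \<epsilon> * (\<Sum>i\<in>UNIV. \<bar>w$i\<bar>)"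
proof -
  have "\<bar>h (x + restrict_coords S w) t - h x t - (\<Sum>i\<in>S. w$i * c i)\<bar> \<le> \<epsilon> * (\<Sum>i\<in>S. \<bar>w$i\<bar>)"
    for S :: "'n set"
  proof (induction S rule: finite_induct[OF finite])
    case 1
    have "restrict_coords {} w = 0" by (simp add: restrict_coords_def vec_eq_iff)
    then show ?case by simp
  next
    case (2 j S)
    let ?y = "x + restrict_coords S w"
    have insert_eq: "x + restrict_coords (insert j S) w = ?y + w$j *\<^sub>R axis j 1"
      using 2(2) by (auto simp: restrict_coords_def vec_eq_iff axis_def)
    have inc: "\<bar>h (?y + w$j *\<^sub>R axis j 1) t - h ?y t - w$j * c j\<bar> \<le> \<epsilon> * \<bar>w$j\<bar>"
    proof (rule axis_increment_le[OF ex])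
      fix s :: real assume s: "\<bar>s\<bar> \<le> \<bar>w$j\<bar>"
      have "norm (?y + s *\<^sub>R axis j 1 - x) \<le> norm w"
        by (rule norm_le_componentwise_cart) (use s 2(2) in \<open>auto simp: restrict_coords_def axis_def\<close>)
      then show "\<bar>pd (Some j) h (?y + s *\<^sub>R axis j 1) t - c j\<bar> \<le> \<epsilon>" by (rule close)
    qed
    have "\<bar>h (x + restrict_coords (insert j S) w) t - h x t - (\<Sum>i\<in>insert j S. w$i * c i)\<bar>
       \<le> \<bar>h (?y + w$j *\<^sub>R axis j 1) t - h ?y t - w$j * c j\<bar>
         + \<bar>h ?y t - h x t - (\<Sum>i\<in>S. w$i * c i)\<bar>"
      unfolding insert_eq using 2 by simp
    also have "\<dots> \<le> \<epsilon> * \<bar>w$j\<bar> + \<epsilon> * (\<Sum>i\<in>S. \<bar>w$i\<bar>)"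
      using inc 2(3) by linarith
    finally show ?case using 2 by (simp add: distrib_left)
  qed
  moreover have "restrict_coords UNIV w = w" by (simp add: restrict_coords_def vec_eq_iff)
  ultimately show ?thesis by metis
qed

lemma continuity_delta_nonneg_time:
  fixes F :: "'a::metric_space \<Rightarrow> real \<Rightarrow> real"
  assumes "continuous_on (UNIV \<times> {0..}) (\<lambda>(x,t). F x t)" "0 \<le> t" "0 < e"
  shows "\<exists>d>0. \<forall>y \<tau>. 0 \<le> \<tau> \<longrightarrow> dist (y, \<tau>) (x, t) < d \<longrightarrow> \<bar>F y \<tau> - F x t\<bar> < e"
proof -
  have "(x, t) \<in> UNIV \<times> {0..}" using assms(2) by auto
  then obtain d where "d > 0" "\<forall>z\<in>UNIV \<times> {0..}. dist z (x, t) < d \<longrightarrow>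
       dist ((\<lambda>(x,t). F x t) z) ((\<lambda>(x,t). F x t) (x,t)) < e"
    using assms(1,3) unfolding continuous_on_iff by blast
  then show ?thesis by (auto simp: dist_real_def)
qed

lemma continuity_delta_nonneg_time_uniform:
  fixes F :: "'n::finite \<Rightarrow> real^'m \<Rightarrow> real \<Rightarrow> real"
  assumes "\<And>i. continuous_on (UNIV \<times> {0..}) (\<lambda>(x,t). F i x t)" "0 \<le> t" "0 < e"
  shows "\<exists>d>0. \<forall>i y \<tau>. 0 \<le> \<tau> \<longrightarrow> dist (y, \<tau>) (x, t) < d \<longrightarrow> \<bar>F i y \<tau> - F i x t\<bar> < e"
proof -
  obtain d where d: "\<And>i. d i > 0"
    and dd: "\<And>i y \<tau>. 0 \<le> \<tau> \<Longrightarrow> dist (y, \<tau>) (x, t) < d i \<Longrightarrow> \<bar>F i y \<tau> - F i x t\<bar> < e"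
    using continuity_delta_nonneg_time[OF assms(1) assms(2,3)] by metis
  have "0 < Min (range d)" using d by (simp add: Min_gr_iff)
  moreover have "Min (range d) \<le> d i" for i by simp
  ultimately show ?thesis using dd by (meson order_less_le_trans)
qed

lemma dist_Pair_le:
  fixes a c :: "'a::real_normed_vector" and b d :: "'b::real_normed_vector"
  shows "dist (a, b) (c, d) \<le> dist a c + dist b d"
  using norm_Pair_le[of "a - c" "b - d"] by (simp add: dist_norm)

lemma line_increment_le_of_continuous_partials:
  fixes h :: "real^'n \<Rightarrow> real \<Rightarrow> real"
  assumes hx: "\<And>i x t. 0 \<le> t \<Longrightarrow> has_pd (Some i) h x t"
    and cx: "\<And>i. continuous_on (UNIV \<times> {0..}) (\<lambda>(x,t). pd (Some i) h x t)"
    and u1: "0 \<le> u1" and e: "0 < e"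
  obtains d where "0 < d"
    and "\<And>u. 0 \<le> u \<Longrightarrow> \<bar>u - u1\<bar> < d \<Longrightarrow> \<bar>h (y1 + (u - u1) *\<^sub>R v) u - h y1 u
           - (u - u1) * (\<Sum>i\<in>UNIV. v$i * pd (Some i) h y1 u1)\<bar> \<le> e * \<bar>u - u1\<bar>"
proof -
  define N where "N = (\<Sum>i\<in>UNIV. \<bar>v$i\<bar>)"
  have N0: "0 \<le> N" unfolding N_def by (simp add: sum_nonneg)
  define \<epsilon> where "\<epsilon> = e / (N + 1)"
  have "0 < \<epsilon>" using e N0 unfolding \<epsilon>_def by simp
  then obtain \<delta> where \<delta>: "0 < \<delta>"
    and close: "\<And>i y \<tau>. 0 \<le> \<tau> \<Longrightarrow> dist (y, \<tau>) (y1, u1) < \<delta> \<Longrightarrow>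
                  \<bar>pd (Some i) h y \<tau> - pd (Some i) h y1 u1\<bar> < \<epsilon>"
    using continuity_delta_nonneg_time_uniform[of "\<lambda>i. pd (Some i) h", OF cx u1] by force
  show ?thesis
  proof (rule that)
    show "0 < \<delta> / (norm v + 1)" using \<delta> by (simp add: add_nonneg_pos)
  next
    fix u assume u: "0 \<le> u" and un: "\<bar>u - u1\<bar> < \<delta> / (norm v + 1)"
    define w where "w = (u - u1) *\<^sub>R v"
    have inc: "\<bar>h (y1 + w) u - h y1 u - (\<Sum>i\<in>UNIV. w$i * pd (Some i) h y1 u1)\<bar> \<le> \<epsilon> * (\<Sum>i\<in>UNIV. \<bar>w$i\<bar>)"
    proof (rule increment_le_of_partials_close)
      show "has_pd (Some i) h y u" for i y using hx u by simp
    next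
      fix i y assume y: "norm (y - y1) \<le> norm w"
      have "norm w = \<bar>u - u1\<bar> * norm v" unfolding w_def by simp
      then have "dist (y, u) (y1, u1) \<le> \<bar>u - u1\<bar> * (norm v + 1)"
        using dist_Pair_le[of y u y1 u1] y by (simp add: dist_norm algebra_simps)
      also have "\<dots> < \<delta>" using un by (simp add: pos_less_divide_eq add_nonneg_pos)
      finally show "\<bar>pd (Some i) h y u - pd (Some i) h y1 u1\<bar> \<le> \<epsilon>"
        using close[OF u, of y i] by simp
    qed
    have S1: "(\<Sum>i\<in>UNIV. w$i * pd (Some i) h y1 u1) = (u - u1) * (\<Sum>i\<in>UNIV. v$i * pd (Some i) h y1 u1)"
      unfolding w_def by (simp add: sum_distrib_left mult.assoc)
    have S2: "(\<Sum>i\<in>UNIV. \<bar>w$i\<bar>) = \<bar>u - u1\<bar> * N"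
      unfolding N_def w_def by (simp add: sum_distrib_left abs_mult)
    have "\<bar>h (y1 + w) u - h y1 u - (u - u1) * (\<Sum>i\<in>UNIV. v$i * pd (Some i) h y1 u1)\<bar>
        \<le> \<epsilon> * (\<bar>u - u1\<bar> * N)"
      using inc unfolding S1 S2 .
    also have "\<dots> \<le> e * \<bar>u - u1\<bar>"
      using mult_left_mono[of "\<epsilon> * N" e "\<bar>u - u1\<bar>"] e N0
      unfolding \<epsilon>_def by (simp add: field_simps)
    finally show "\<bar>h (y1 + (u - u1) *\<^sub>R v) u - h y1 u
        - (u - u1) * (\<Sum>i\<in>UNIV. v$i * pd (Some i) h y1 u1)\<bar> \<le> e * \<bar>u - u1\<bar>"
      unfolding w_def .
  qed
qed

lemma pd_has_real_derivative_along_line: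
  fixes h :: "real^'n \<Rightarrow> real \<Rightarrow> real"
  assumes hx: "\<And>i x t. 0 \<le> t \<Longrightarrow> has_pd (Some i) h x t"
    and ht: "\<And>x t. 0 \<le> t \<Longrightarrow> has_pd None h x t"
    and cx: "\<And>i. continuous_on (UNIV \<times> {0..}) (\<lambda>(x,t). pd (Some i) h x t)"
    and t0: "0 \<le> t0" and u1: "t0 \<le> u1"
  shows "((\<lambda>u. h (x0 + (u - t0) *\<^sub>R v) u) has_real_derivative
          (\<Sum>i\<in>UNIV. v$i * pd (Some i) h (x0 + (u1 - t0) *\<^sub>R v) u1) + pd None h (x0 + (u1 - t0) *\<^sub>R v) u1)
          (at u1 within {t0..})"
proof -
  define y1 where "y1 = x0 + (u1 - t0) *\<^sub>R v"
  define D where "D = (\<Sum>i\<in>UNIV. v$i * pd (Some i) h y1 u1)"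
  have line: "x0 + (u - t0) *\<^sub>R v = y1 + (u - u1) *\<^sub>R v" for u
    unfolding y1_def by (simp add: algebra_simps)
  have "((\<lambda>u. h (y1 + (u - u1) *\<^sub>R v) u - h y1 u) has_real_derivative D) (at u1 within {t0..})"
    unfolding has_field_derivative_def has_derivative_within_alt
  proof (intro conjI allI impI bounded_linear_mult_right)
    fix e :: real assume "0 < e"
    then obtain d where "0 < d" and d: "\<And>u. 0 \<le> u \<Longrightarrow> \<bar>u - u1\<bar> < d \<Longrightarrow>
        \<bar>h (y1 + (u - u1) *\<^sub>R v) u - h y1 u - (u - u1) * D\<bar> \<le> e * \<bar>u - u1\<bar>"
      using line_increment_le_of_continuous_partials[OF hx cx, of u1 e y1 v] t0 u1
      unfolding D_def by auto
    then show "\<exists>d>0. \<forall>u\<in>{t0..}. norm (u - u1) < d \<longrightarrow> norm ((h (y1 + (u - u1) *\<^sub>R v) u - h y1 u)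
        - (h (y1 + (u1 - u1) *\<^sub>R v) u1 - h y1 u1) - D * (u - u1)) \<le> e * norm (u - u1)"
      using t0 by (auto simp: mult.commute)
  qed
  moreover have "((\<lambda>u. h y1 u) has_real_derivative pd None h y1 u1) (at u1 within {t0..})"
    by (rule pd_time_has_real_derivative[OF ht t0]) (use t0 u1 in auto)
  ultimately have "((\<lambda>u. (h (y1 + (u - u1) *\<^sub>R v) u - h y1 u) + h y1 u)
      has_real_derivative D + pd None h y1 u1) (at u1 within {t0..})"
    by (rule DERIV_add)
  then show ?thesis unfolding line y1_def[symmetric] D_def by simp
qed

lemma second_difference_eq_pd_time_axis:
  fixes g :: "real^'n \<Rightarrow> real \<Rightarrow> real"
  assumes gk: "\<And>x t. 0 \<le> t \<Longrightarrow> has_pd (Some k) g x t"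
    and gtk: "\<And>x t. 0 \<le> t \<Longrightarrow> has_pd None (pd (Some k) g) x t"
    and t: "0 \<le> t" and s: "0 < s"
  obtains \<sigma> \<tau> where "0 < \<sigma>" "\<sigma> < s" "t < \<tau>" "\<tau> < t + s"
    "g (x + s *\<^sub>R axis k 1) (t + s) - g (x + s *\<^sub>R axis k 1) t - g x (t + s) + g x t
       = s * (s * pd None (pd (Some k) g) (x + \<sigma> *\<^sub>R axis k 1) \<tau>)"
proof -
  let ?e = "axis k (1::real)"
  define \<phi> where "\<phi> = (\<lambda>\<sigma>. g (x + \<sigma> *\<^sub>R ?e) (t + s) - g (x + \<sigma> *\<^sub>R ?e) t)"
  define \<phi>' where "\<phi>' = (\<lambda>\<sigma>. pd (Some k) g (x + \<sigma> *\<^sub>R ?e) (t + s) - pd (Some k) g (x + \<sigma> *\<^sub>R ?e) t)"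
  have "(\<phi> has_real_derivative \<phi>' \<sigma>) (at \<sigma>)" for \<sigma>
    unfolding \<phi>_def \<phi>'_def using t s by (intro DERIV_diff pd_axis_has_real_derivative gk) auto
  then obtain \<sigma> where \<sigma>: "0 < \<sigma>" "\<sigma> < s" "\<phi> s - \<phi> 0 = (s - 0) * \<phi>' \<sigma>"
    using MVT2[OF s, of \<phi> \<phi>'] by blast
  define \<psi> where "\<psi> = (\<lambda>\<tau>. pd (Some k) g (x + \<sigma> *\<^sub>R ?e) \<tau>)"
  have "(\<psi> has_real_derivative pd None (pd (Some k) g) (x + \<sigma> *\<^sub>R ?e) \<tau>) (at \<tau> within {t..})"
    if "t \<le> \<tau>" for \<tau>
    unfolding \<psi>_def by (rule pd_time_has_real_derivative[OF gtk t]) (use t that in auto)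
  then obtain \<tau> where \<tau>: "t < \<tau>" "\<tau> < t + s"
    "\<psi> (t + s) - \<psi> t = (t + s - t) * pd None (pd (Some k) g) (x + \<sigma> *\<^sub>R ?e) \<tau>"
    using MVT_within_atLeast[of t "t + s" \<psi> "pd None (pd (Some k) g) (x + \<sigma> *\<^sub>R ?e)"] s
    by auto
  show ?thesis
    by (rule that[OF \<sigma>(1,2) \<tau>(1,2)])
       (use \<sigma>(3) \<tau>(3) in \<open>simp add: \<phi>_def \<phi>'_def \<psi>_def algebra_simps\<close>)
qed

lemma second_difference_eq_pd_axis_time:
  fixes g :: "real^'n \<Rightarrow> real \<Rightarrow> real"
  assumes gt: "\<And>x t. 0 \<le> t \<Longrightarrow> has_pd None g x t"
    and gkt: "\<And>x t. 0 \<le> t \<Longrightarrow> has_pd (Some k) (pd None g) x t"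
    and t: "0 \<le> t" and s: "0 < s"
  obtains \<sigma> \<tau> where "0 < \<sigma>" "\<sigma> < s" "t < \<tau>" "\<tau> < t + s"
    "g (x + s *\<^sub>R axis k 1) (t + s) - g (x + s *\<^sub>R axis k 1) t - g x (t + s) + g x t
       = s * (s * pd (Some k) (pd None g) (x + \<sigma> *\<^sub>R axis k 1) \<tau>)"
proof -
  let ?e = "axis k (1::real)"
  define \<zeta> where "\<zeta> = (\<lambda>\<tau>. g (x + s *\<^sub>R ?e) \<tau> - g x \<tau>)"
  define \<zeta>' where "\<zeta>' = (\<lambda>\<tau>. pd None g (x + s *\<^sub>R ?e) \<tau> - pd None g x \<tau>)"
  have "(\<zeta> has_real_derivative \<zeta>' \<tau>) (at \<tau> within {t..})" if "t \<le> \<tau>" for \<tau>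
    unfolding \<zeta>_def \<zeta>'_def using t that by (intro DERIV_diff pd_time_has_real_derivative gt) auto
  then obtain \<tau> where \<tau>: "t < \<tau>" "\<tau> < t + s" "\<zeta> (t + s) - \<zeta> t = (t + s - t) * \<zeta>' \<tau>"
    using MVT_within_atLeast[of t "t + s" \<zeta> \<zeta>'] s by auto
  define \<eta> where "\<eta> = (\<lambda>\<sigma>. pd None g (x + \<sigma> *\<^sub>R ?e) \<tau>)"
  have "(\<eta> has_real_derivative pd (Some k) (pd None g) (x + \<sigma> *\<^sub>R ?e) \<tau>) (at \<sigma>)" for \<sigma>
    unfolding \<eta>_def using t \<tau> by (intro pd_axis_has_real_derivative gkt) auto
  then obtain \<sigma> where \<sigma>: "0 < \<sigma>" "\<sigma> < s"
    "\<eta> s - \<eta> 0 = (s - 0) * pd (Some k) (pd None g) (x + \<sigma> *\<^sub>R ?e) \<tau>"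
    using MVT2[OF s, of \<eta> "\<lambda>\<sigma>. pd (Some k) (pd None g) (x + \<sigma> *\<^sub>R ?e) \<tau>"] by blast
  show ?thesis
    by (rule that[OF \<sigma>(1,2) \<tau>(1,2)])
       (use \<sigma>(3) \<tau>(3) in \<open>simp add: \<zeta>_def \<zeta>'_def \<eta>_def algebra_simps\<close>)
qed

lemma dist_axis_box_less:
  assumes "0 < \<sigma>" "\<sigma> < s" "t < \<tau>" "\<tau> < t + s"
  shows "dist (x + \<sigma> *\<^sub>R axis k (1::real), \<tau>) (x, t) < 2 * s"
proof -
  have "dist (x + \<sigma> *\<^sub>R axis k (1::real), \<tau>) (x, t) \<le> \<sigma> + (\<tau> - t)"
    using dist_Pair_le[of "x + \<sigma> *\<^sub>R axis k 1" \<tau> x t] assms by (simp add: dist_norm)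
  then show ?thesis using assms by linarith
qed

text \<open>Schwarz's theorem for a mixed space-time partial derivative: both mixed partials are
  limits of the same second difference quotient on shrinking squares.\<close>
lemma pd_axis_time_commute:
  fixes g :: "real^'n \<Rightarrow> real \<Rightarrow> real"
  assumes gk: "\<And>x t. 0 \<le> t \<Longrightarrow> has_pd (Some k) g x t"
    and gt: "\<And>x t. 0 \<le> t \<Longrightarrow> has_pd None g x t"
    and gtk: "\<And>x t. 0 \<le> t \<Longrightarrow> has_pd None (pd (Some k) g) x t"
    and gkt: "\<And>x t. 0 \<le> t \<Longrightarrow> has_pd (Some k) (pd None g) x t"
    and c1: "continuous_on (UNIV \<times> {0..}) (\<lambda>(x,t). pd None (pd (Some k) g) x t)"
    and c2: "continuous_on (UNIV \<times> {0..}) (\<lambda>(x,t). pd (Some k) (pd None g) x t)"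
    and t: "0 \<le> t"
  shows "pd (Some k) (pd None g) x t = pd None (pd (Some k) g) x t"
proof (rule ccontr)
  define C1 where "C1 = pd None (pd (Some k) g) x t"
  define C2 where "C2 = pd (Some k) (pd None g) x t"
  define \<delta> where "\<delta> = \<bar>C1 - C2\<bar> / 2"
  assume "C2 \<noteq> C1"
  then have \<delta>0: "0 < \<delta>" unfolding \<delta>_def by simp
  obtain d1 where d1: "d1 > 0" "\<And>y \<tau>. 0 \<le> \<tau> \<Longrightarrow> dist (y, \<tau>) (x, t) < d1 \<Longrightarrow>
      \<bar>pd None (pd (Some k) g) y \<tau> - C1\<bar> < \<delta>"
    using continuity_delta_nonneg_time[OF c1 t \<delta>0] unfolding C1_def by blast
  obtain d2 where d2: "d2 > 0" "\<And>y \<tau>. 0 \<le> \<tau> \<Longrightarrow> dist (y, \<tau>) (x, t) < d2 \<Longrightarrow>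
      \<bar>pd (Some k) (pd None g) y \<tau> - C2\<bar> < \<delta>"
    using continuity_delta_nonneg_time[OF c2 t \<delta>0] unfolding C2_def by blast
  define s where "s = min d1 d2 / 2"
  have s0: "0 < s" using d1 d2 unfolding s_def by simp
  obtain \<sigma>1 \<tau>1 where r1: "0 < \<sigma>1" "\<sigma>1 < s" "t < \<tau>1" "\<tau>1 < t + s"
    "g (x + s *\<^sub>R axis k 1) (t + s) - g (x + s *\<^sub>R axis k 1) t - g x (t + s) + g x t
       = s * (s * pd None (pd (Some k) g) (x + \<sigma>1 *\<^sub>R axis k 1) \<tau>1)"
    using second_difference_eq_pd_time_axis[OF gk gtk t s0] by blast
  obtain \<sigma>2 \<tau>2 where r2: "0 < \<sigma>2" "\<sigma>2 < s" "t < \<tau>2" "\<tau>2 < t + s"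
    "g (x + s *\<^sub>R axis k 1) (t + s) - g (x + s *\<^sub>R axis k 1) t - g x (t + s) + g x t
       = s * (s * pd (Some k) (pd None g) (x + \<sigma>2 *\<^sub>R axis k 1) \<tau>2)"
    using second_difference_eq_pd_axis_time[OF gt gkt t s0] by blast
  define Q where "Q = pd None (pd (Some k) g) (x + \<sigma>1 *\<^sub>R axis k 1) \<tau>1"
  have "Q = pd (Some k) (pd None g) (x + \<sigma>2 *\<^sub>R axis k 1) \<tau>2"
    using r1(5) r2(5) s0 unfolding Q_def by simp
  then have "\<bar>Q - C2\<bar> < \<delta>"
    using d2(2) dist_axis_box_less[OF r2(1-4), of x k] r2 t unfolding s_def by simp
  moreover have "\<bar>Q - C1\<bar> < \<delta>"
    using d1(2) dist_axis_box_less[OF r1(1-4), of x k] r1 t unfolding Q_def s_def by simp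
  moreover have "\<bar>C1 - C2\<bar> \<le> \<bar>Q - C2\<bar> + \<bar>Q - C1\<bar>"
    using abs_triangle_ineq4[of "Q - C2" "Q - C1"] by simp
  ultimately show False unfolding \<delta>_def by simp
qed

lemma has_vector_derivative_vec_componentwise:
  fixes F :: "real \<Rightarrow> real^'n"
  assumes "\<And>i. ((\<lambda>u. F u $ i) has_real_derivative F' $ i) (at u within S)"
  shows "(F has_vector_derivative F') (at u within S)"
proof -
  have "((\<lambda>x. F x $ i) has_derivative (\<lambda>h. h * F' $ i)) (at u within S)" for i
    using assms[of i] unfolding has_field_derivative_def by (simp add: mult.commute[of _ "F' $ i"])
  then show ?thesis
    unfolding has_vector_derivative_def
    by (subst has_derivative_componentwise_within) (auto simp: Basis_vec_def inner_axis)
qed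

lemma sum_bilinear_regroup:
  fixes v :: "'n::finite \<Rightarrow> real"
  shows "(\<Sum>j\<in>UNIV. ((\<Sum>k\<in>UNIV. v k * A k j) + B j) * v j) + ((\<Sum>k\<in>UNIV. v k * B k) + C)
    = (\<Sum>k\<in>UNIV. v k * (\<Sum>j\<in>UNIV. A k j * v j)) + 2 * (\<Sum>j\<in>UNIV. B j * v j) + C"
proof -
  have "(\<Sum>j\<in>UNIV. ((\<Sum>k\<in>UNIV. v k * A k j) + B j) * v j)
      = (\<Sum>j\<in>UNIV. \<Sum>k\<in>UNIV. v k * A k j * v j) + (\<Sum>j\<in>UNIV. B j * v j)"
    by (simp add: distrib_right sum.distrib sum_distrib_right)
  moreover have "(\<Sum>j\<in>UNIV. \<Sum>k\<in>UNIV. v k * A k j * v j) = (\<Sum>k\<in>UNIV. \<Sum>j\<in>UNIV. v k * A k j * v j)"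
    by (rule sum.swap)
  moreover have "(\<Sum>k\<in>UNIV. \<Sum>j\<in>UNIV. v k * A k j * v j) = (\<Sum>k\<in>UNIV. v k * (\<Sum>j\<in>UNIV. A k j * v j))"
    by (simp add: sum_distrib_left mult.assoc)
  moreover have "(\<Sum>k\<in>UNIV. v k * B k) = (\<Sum>j\<in>UNIV. B j * v j)" by (simp add: mult.commute)
  ultimately show ?thesis by simp
qed

locale C3_time_function =
  fixes f :: "real^'n \<Rightarrow> real \<Rightarrow> real"
  assumes smooth: "C3_time f"
begin

lemma has_pd_foldr: "length ds < 3 \<Longrightarrow> 0 \<le> t \<Longrightarrow> has_pd d (foldr pd ds f) x t"
  using smooth unfolding C3_time_def by blast

lemma continuous_on_foldr_pd:
  "length ds \<le> 3 \<Longrightarrow> continuous_on (UNIV \<times> {0..}) (\<lambda>(x,t). foldr pd ds f x t)"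
  using smooth unfolding C3_time_def by blast

lemma has_pd_pd: "0 \<le> t \<Longrightarrow> has_pd d (pd a f) x t"
  using has_pd_foldr[of "[a]"] by simp

lemma has_pd_pd_pd: "0 \<le> t \<Longrightarrow> has_pd d (pd a (pd b f)) x t"
  using has_pd_foldr[of "[a, b]"] by simp

lemma continuous_on_pd_pd: "continuous_on (UNIV \<times> {0..}) (\<lambda>(x,t). pd a (pd b f) x t)"
  using continuous_on_foldr_pd[of "[a, b]"] by simp

lemma continuous_on_pd_pd_pd: "continuous_on (UNIV \<times> {0..}) (\<lambda>(x,t). pd a (pd b (pd c f)) x t)"
  using continuous_on_foldr_pd[of "[a, b, c]"] by simp

lemma pd_axis_time_pd_commute:
  "0 \<le> t \<Longrightarrow> pd (Some k) (pd None (pd (Some i) f)) x t = pd None (pd (Some k) (pd (Some i) f)) x t"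
  by (rule pd_axis_time_commute) (auto intro: has_pd_pd has_pd_pd_pd continuous_on_pd_pd_pd)

lemma grad_x_along_line_has_vector_derivative:
  assumes "0 \<le> t0" "t0 \<le> u"
  shows "((\<lambda>u. grad_x f (x0 + (u - t0) *\<^sub>R v) u) has_vector_derivative
     (hess_xx f (x0 + (u - t0) *\<^sub>R v) u *v v + grad_xt f (x0 + (u - t0) *\<^sub>R v) u)) (at u within {t0..})"
proof (rule has_vector_derivative_vec_componentwise)
  fix i
  have "((\<lambda>u. pd (Some i) f (x0 + (u - t0) *\<^sub>R v) u) has_real_derivative
          (\<Sum>j\<in>UNIV. v$j * pd (Some j) (pd (Some i) f) (x0 + (u - t0) *\<^sub>R v) u)
           + pd None (pd (Some i) f) (x0 + (u - t0) *\<^sub>R v) u) (at u within {t0..})"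
    by (rule pd_has_real_derivative_along_line) (auto intro: has_pd_pd continuous_on_pd_pd assms)
  then show "((\<lambda>u. grad_x f (x0 + (u - t0) *\<^sub>R v) u $ i) has_real_derivative
     (hess_xx f (x0 + (u - t0) *\<^sub>R v) u *v v + grad_xt f (x0 + (u - t0) *\<^sub>R v) u) $ i) (at u within {t0..})"
    by (simp add: grad_x_def hess_xx_def grad_xt_def matrix_vector_mult_def mult.commute)
qed

text \<open>The second derivative of $\tau \mapsto \nabla_x f(x_0 + (\tau - t_0) v, \tau)$ at the
  point $(y, u)$ of that line.\<close>
definition grad_x_line_deriv2 :: "real^'n \<Rightarrow> real \<Rightarrow> real^'n \<Rightarrow> real^'n" where
  "grad_x_line_deriv2 y u v =
     (\<Sum>k\<in>UNIV. v$k *\<^sub>R (hess_xxx f k y u *v v)) + 2 *\<^sub>R (hess_xxt f y u *v v) + grad_xtt f y u"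

lemma grad_x_line_deriv_has_vector_derivative:
  assumes t0: "0 \<le> t0" and u: "t0 \<le> u"
  shows "((\<lambda>u. hess_xx f (x0 + (u - t0) *\<^sub>R v) u *v v + grad_xt f (x0 + (u - t0) *\<^sub>R v) u)
     has_vector_derivative grad_x_line_deriv2 (x0 + (u - t0) *\<^sub>R v) u v) (at u within {t0..})"
proof (rule has_vector_derivative_vec_componentwise)
  fix i
  let ?p = "x0 + (u - t0) *\<^sub>R v"
  let ?D = "\<lambda>g. (\<Sum>k\<in>UNIV. v$k * pd (Some k) g ?p u) + pd None g ?p u"
  have "((\<lambda>u. pd d (pd (Some i) f) (x0 + (u - t0) *\<^sub>R v) u) has_real_derivative
          ?D (pd d (pd (Some i) f))) (at u within {t0..})" for d
    by (rule pd_has_real_derivative_along_line) (auto intro: has_pd_pd_pd continuous_on_pd_pd_pd assms)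
  then have "((\<lambda>u. (\<Sum>j\<in>UNIV. pd (Some j) (pd (Some i) f) (x0 + (u - t0) *\<^sub>R v) u * v$j)
                  + pd None (pd (Some i) f) (x0 + (u - t0) *\<^sub>R v) u)
     has_real_derivative (\<Sum>j\<in>UNIV. ?D (pd (Some j) (pd (Some i) f)) * v$j) + ?D (pd None (pd (Some i) f)))
     (at u within {t0..})"
    by (intro DERIV_add DERIV_sum DERIV_cmult_right)
  moreover have "(\<Sum>j\<in>UNIV. ?D (pd (Some j) (pd (Some i) f)) * v$j) + ?D (pd None (pd (Some i) f))
     = grad_x_line_deriv2 ?p u v $ i"
  proof -
    \<comment> \<open>commuting the mixed partials merges two $\nabla_{xxt}$ terms into the factor 2\<close>
    have "(\<Sum>k\<in>UNIV. v$k * pd (Some k) (pd None (pd (Some i) f)) ?p u)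
        = (\<Sum>k\<in>UNIV. v$k * pd None (pd (Some k) (pd (Some i) f)) ?p u)"
      using pd_axis_time_pd_commute t0 u by simp
    then show ?thesis
      using sum_bilinear_regroup[where v="\<lambda>k. v$k"
          and A="\<lambda>k j. pd (Some k) (pd (Some j) (pd (Some i) f)) ?p u"
          and B="\<lambda>j. pd None (pd (Some j) (pd (Some i) f)) ?p u"]
      by (simp add: grad_x_line_deriv2_def hess_xxx_def hess_xxt_def grad_xtt_def
          matrix_vector_mult_def)
  qed
  ultimately show "((\<lambda>u. (hess_xx f (x0 + (u - t0) *\<^sub>R v) u *v v + grad_xt f (x0 + (u - t0) *\<^sub>R v) u) $ i)
     has_real_derivative grad_x_line_deriv2 ?p u v $ i) (at u within {t0..})"
    by (simp add: hess_xx_def grad_xt_def matrix_vector_mult_def)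
qed

end

section \<open>Strong convexity in space\<close>

locale strongly_convex_time =
  fixes f :: "real^'n \<Rightarrow> real \<Rightarrow> real" and m :: real
  assumes m_pos: "0 < m"
    and strong_convex: "\<And>x t. 0 \<le> t \<Longrightarrow> psd (hess_xx f x t - m *\<^sub>R mat 1)"
begin

lemma hess_xx_coercive: "0 \<le> t \<Longrightarrow> m * (v \<bullet> v) \<le> v \<bullet> (hess_xx f x t *v v)"
  using strong_convex[of t x] unfolding psd_def
  by (simp add: matrix_vector_mult_diff_rdistrib scaleR_matrix_vector_assoc[symmetric]
      inner_diff_right)

lemma hess_xx_invertible:
  assumes "0 \<le> t"
  shows "invertible (hess_xx f x t)"
proof -
  have "inj ((*v) (hess_xx f x t))"
  proof (rule injI)
    fix a b assume "hess_xx f x t *v a = hess_xx f x t *v b"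
    then have "hess_xx f x t *v (a - b) = 0" by (simp add: matrix_vector_mult_diff_distrib)
    then have "m * ((a - b) \<bullet> (a - b)) \<le> 0" using hess_xx_coercive[OF assms, of "a - b" x] by simp
    then have "(a - b) \<bullet> (a - b) \<le> 0" using m_pos by (simp add: mult_le_0_iff)
    then show "a = b" by (simp add: inner_gt_zero_iff[symmetric, of "a - b"] not_less[symmetric])
  qed
  then show ?thesis
    using matrix_left_invertible_injective invertible_left_inverse by blast
qed

lemma hess_xx_matrix_inv_right:
  assumes "0 \<le> t"
  shows "hess_xx f x t *v (matrix_inv (hess_xx f x t) *v w) = w"
proof -
  let ?H = "hess_xx f x t"
  have "\<exists>A'. ?H ** A' = mat 1 \<and> A' ** ?H = mat 1"
    using hess_xx_invertible[OF assms] unfolding invertible_def .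
  then have "?H ** matrix_inv ?H = mat 1"
    unfolding matrix_inv_def by (rule someI2_ex) blast
  then show ?thesis by (simp add: matrix_vector_mul_assoc)
qed

lemma norm_matrix_inv_hess_xx_le:
  assumes "0 \<le> t"
  shows "norm (matrix_inv (hess_xx f x t) *v w) \<le> norm w / m"
proof -
  define y where "y = matrix_inv (hess_xx f x t) *v w"
  have "m * (norm y)\<^sup>2 \<le> y \<bullet> w"
    using hess_xx_coercive[OF assms, of y x] hess_xx_matrix_inv_right[OF assms]
    by (simp add: y_def power2_norm_eq_inner)
  also have "\<dots> \<le> norm y * norm w" by (rule norm_cauchy_schwarz)
  finally have "m * norm y \<le> norm w"
    by (cases "norm y = 0") (auto simp: power2_eq_square mult.assoc[symmetric])
  then show ?thesis unfolding y_def[symmetric] using m_pos by (simp add: field_simps)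
qed

text \<open>The defining property of $\dot{x}_k$: it makes the time derivative of
  $\nabla_x f(x(t),t)$ at $t_k$ equal to $-\alpha \nabla_x f(x_k,t_k)$.\<close>
lemma hess_xx_xdot:
  "0 \<le> t \<Longrightarrow> hess_xx f x t *v xdot f \<alpha> x t + grad_xt f x t = - (\<alpha> *\<^sub>R grad_x f x t)"
  unfolding xdot_def by (simp add: linear_neg hess_xx_matrix_inv_right)

lemma norm_xdot_le:
  assumes "0 \<le> t"
  shows "norm (xdot f \<alpha> x t) \<le> (\<bar>\<alpha>\<bar> * norm (grad_x f x t) + norm (grad_xt f x t)) / m"
proof -
  have "norm (xdot f \<alpha> x t) \<le> norm (\<alpha> *\<^sub>R grad_x f x t + grad_xt f x t) / m"
    unfolding xdot_def norm_minus_cancel by (rule norm_matrix_inv_hess_xx_le[OF assms])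
  also have "\<dots> \<le> (\<bar>\<alpha>\<bar> * norm (grad_x f x t) + norm (grad_xt f x t)) / m"
    using m_pos by (intro divide_right_mono) (auto intro: order_trans[OF norm_triangle_ineq])
  finally show ?thesis .
qed

end

section \<open>Roots of the step polynomial\<close>

lemma cubic_strict_mono:
  fixes c1 c2 c3 x y :: real
  assumes c: "0 \<le> c2" "0 \<le> c3" "0 < c1" and xy: "0 \<le> x" "x < y"
  shows "c3 * x^3 + c2 * x\<^sup>2 + c1 * x < c3 * y^3 + c2 * y\<^sup>2 + c1 * y"
proof -
  have "c3 * x^3 \<le> c3 * y^3" "c2 * x\<^sup>2 \<le> c2 * y\<^sup>2"
    using c xy by (auto intro!: mult_left_mono power_mono)
  moreover have "c1 * x < c1 * y" using c xy by simp
  ultimately show ?thesis by (intro add_le_less_mono add_mono)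
qed

lemma Inf_positive_roots_cubic:
  fixes c0 c1 c2 c3 tk :: real
  assumes c: "0 \<le> c2" "0 \<le> c3" "0 < c1" "0 < c0"
    and \<Phi>: "\<And>t. \<Phi> t = c3 * (t - tk)^3 + c2 * (t - tk)\<^sup>2 + c1 * (t - tk) - c0"
  shows "tk < Inf {t. tk < t \<and> \<Phi> t = 0} \<and> \<Phi> (Inf {t. tk < t \<and> \<Phi> t = 0}) = 0"
proof -
  have mono: "\<Phi> x < \<Phi> y" if "tk \<le> x" "x < y" for x y
    unfolding \<Phi> using cubic_strict_mono[OF c(1-3), of "x - tk" "y - tk"] that by simp
  define T where "T = c0 / c1 + 1"
  have T0: "0 < T" using c unfolding T_def by (simp add: add_pos_pos)
  have "c0 < c1 * T" using c unfolding T_def by (simp add: field_simps)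
  moreover have "0 \<le> c3 * T^3 + c2 * T\<^sup>2" using c T0 by simp
  ultimately have "0 \<le> \<Phi> (tk + T)" unfolding \<Phi> by simp
  moreover have "continuous_on {tk..tk+T} \<Phi>" unfolding \<Phi> by (intro continuous_intros)
  moreover have \<Phi>_tk: "\<Phi> tk = - c0" unfolding \<Phi> by simp
  ultimately obtain t1 where t1: "tk \<le> t1" "\<Phi> t1 = 0"
    using IVT'[of \<Phi> tk 0 "tk + T"] T0 c by auto
  then have t1g: "tk < t1" using \<Phi>_tk c by (cases "t1 = tk") auto
  have "t = t1" if "tk < t" "\<Phi> t = 0" for t
    using mono[of t t1] mono[of t1 t] that t1 t1g by (cases t t1 rule: linorder_cases) simp_all
  then have "{t. tk < t \<and> \<Phi> t = 0} = {t1}" using t1(2) t1g by blast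
  then show ?thesis using t1g t1 by simp
qed

lemma root_lower_bound:
  fixes s c0 c1 c2 c3 d1 d2 d3 l :: real
  assumes s: "0 < s" and c: "0 \<le> c3" "c3 \<le> d3" "0 \<le> c2" "c2 \<le> d2" "0 \<le> c1" "c1 \<le> d1"
    and eq: "c3 * s^3 + c2 * s\<^sup>2 + c1 * s = c0" and l: "l \<le> c0" and D: "0 < d3 + d2 + d1"
  shows "min 1 (l / (d3 + d2 + d1)) \<le> s"
proof (cases "1 \<le> s")
  case False
  then have "s^3 \<le> s" "s\<^sup>2 \<le> s"
    using s by (auto intro: power_le_imp_le_exp simp: power_le_one_iff
        power_decreasing[of 1 _ s, simplified])
  then have "c3 * s^3 \<le> d3 * s" "c2 * s\<^sup>2 \<le> d2 * s" "c1 * s \<le> d1 * s"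
    using c s by (auto intro: mult_mono mult_right_mono)
  then have "l \<le> (d3 + d2 + d1) * s" using eq l by (simp add: algebra_simps)
  then show ?thesis using D by (simp add: divide_le_eq mult.commute min.coboundedI2)
qed simp

text \<open>The hypothesis says that $s$ is a root of the cubic $\phi_k$, written with
  $X = \sqrt{2V(t_k)}$.\<close>
lemma cubic_root_bound:
  fixes X b \<alpha> s :: real
  assumes X: "0 \<le> X" and b: "0 \<le> b" and \<alpha>: "0 < \<alpha>" and s: "0 < s"
    and root: "1/2 * b\<^sup>2 * s^3 + 3/2 * \<alpha> * X * b * s\<^sup>2 + (X * b + \<alpha>\<^sup>2 * X\<^sup>2) * s - \<alpha> * X\<^sup>2 = 0"
  shows "(\<bar>1 - \<alpha> * s\<bar> * X + b * s\<^sup>2)\<^sup>2 / 2 \<le> X\<^sup>2 / 2 - \<alpha>\<^sup>2 * (X\<^sup>2 / 2) * s\<^sup>2"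
proof -
  have "\<bar>1 - \<alpha> * s\<bar> \<le> 1 + \<alpha> * s" using \<alpha> s by (simp add: abs_le_iff)
  then have "\<bar>1 - \<alpha> * s\<bar> * (X * b * s\<^sup>2) \<le> (1 + \<alpha> * s) * (X * b * s\<^sup>2)"
    using X b by (intro mult_right_mono) auto
  then have "(\<bar>1 - \<alpha> * s\<bar> * X + b * s\<^sup>2)\<^sup>2
      \<le> (1 - \<alpha> * s)\<^sup>2 * X\<^sup>2 + 2 * (1 + \<alpha> * s) * (X * b * s\<^sup>2) + b\<^sup>2 * s^4"
    by (simp add: power2_eq_square power4_eq_xxxx algebra_simps)
  also have "\<dots> = X\<^sup>2 - \<alpha>\<^sup>2 * X\<^sup>2 * s\<^sup>2 + 2 * s * (1/2 * b\<^sup>2 * s^3 + 3/2 * \<alpha> * X * b * s\<^sup>2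
      + (X * b + \<alpha>\<^sup>2 * X\<^sup>2) * s - \<alpha> * X\<^sup>2) - \<alpha> * X * b * s^3"
    by (simp add: power2_eq_square power3_eq_cube power4_eq_xxxx algebra_simps)
  finally have "(\<bar>1 - \<alpha> * s\<bar> * X + b * s\<^sup>2)\<^sup>2 \<le> X\<^sup>2 - \<alpha>\<^sup>2 * X\<^sup>2 * s\<^sup>2 + 2 * s * 0 - \<alpha> * X * b * s^3"
    unfolding root .
  moreover have "0 \<le> \<alpha> * X * b * s^3" using \<alpha> X b s by simp
  ultimately have "(\<bar>1 - \<alpha> * s\<bar> * X + b * s\<^sup>2)\<^sup>2 \<le> X\<^sup>2 - \<alpha>\<^sup>2 * X\<^sup>2 * s\<^sup>2"
    by simp
  then show ?thesis by (simp add: field_simps)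
qed

lemma quadratic_root_bound:
  fixes X a b \<alpha> s :: real
  assumes root: "1/2 * a * b * s\<^sup>2 + (a\<^sup>2 + b * X) * s - \<alpha> * X\<^sup>2 = 0"
  shows "X\<^sup>2 / 2 - \<alpha> * X\<^sup>2 * s + (X * b + a\<^sup>2) * s\<^sup>2 = X\<^sup>2 / 2 - 1/2 * a * b * s^3"
proof -
  have "X\<^sup>2 / 2 - \<alpha> * X\<^sup>2 * s + (X * b + a\<^sup>2) * s\<^sup>2
      = X\<^sup>2 / 2 - 1/2 * a * b * s^3 + s * (1/2 * a * b * s\<^sup>2 + (a\<^sup>2 + b * X) * s - \<alpha> * X\<^sup>2)"
    by (simp add: power2_eq_square power3_eq_cube algebra_simps)
  then show ?thesis unfolding root by simp
qed

section \<open>The tracking iteration\<close>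

lemma LIMSEQ_zero_of_uniform_decrease:
  fixes V :: "nat \<Rightarrow> real"
  assumes nonneg: "\<And>k. 0 \<le> V k" and dec: "\<And>k. V (Suc k) \<le> V k"
    and unif: "\<And>r M. 0 < r \<Longrightarrow> r \<le> M \<Longrightarrow> \<exists>c>0. \<forall>k. r \<le> V k \<longrightarrow> V k \<le> M \<longrightarrow> V (Suc k) \<le> V k - c"
  shows "V \<longlonglongrightarrow> 0"
proof -
  obtain L where L: "V \<longlonglongrightarrow> L" and L_le: "\<And>k. L \<le> V k"
    using decseq_convergent[of V 0] dec nonneg by (auto simp: decseq_Suc_iff)
  have "0 \<le> L" using L nonneg by (simp add: LIMSEQ_le_const)
  moreover have "\<not> 0 < L"
  proof
    assume "0 < L"
    then obtain c where "0 < c" "\<forall>k. L \<le> V k \<longrightarrow> V k \<le> V 0 \<longrightarrow> V (Suc k) \<le> V k - c"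
      using unif L_le by blast
    moreover have "V k \<le> V 0" for k using lift_Suc_antimono_le[of V 0 k] dec by simp
    ultimately have c: "0 < c" "\<And>k. V (Suc k) - V k \<le> - c" using L_le by (auto simp: algebra_simps)
    have "(\<lambda>k. V (Suc k) - V k) \<longlonglongrightarrow> L - L"
      using L by (intro tendsto_diff LIMSEQ_Suc)
    then have "L - L \<le> - c" by (rule LIMSEQ_le_const2) (use c(2) in auto)
    then show False using c(1) by simp
  qed
  ultimately show ?thesis using L by simp
qed

lemma norm_matrix_vector_mult_le: "norm (A *v v) \<le> spec_norm A * norm v"
  unfolding spec_norm_def by (rule onorm[OF matrix_vector_mul_bounded_linear])

lemma norm1_nonneg: "0 \<le> norm1 v"
  unfolding norm1_def by (simp add: sum_nonneg)

lemma norm1_le_card_mult_norm: "norm1 (v::real^'n) \<le> real CARD('n) * norm v"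
proof -
  have "norm1 v \<le> (\<Sum>i\<in>(UNIV::'n set). norm v)"
    unfolding norm1_def by (rule sum_mono) (rule component_le_norm_cart)
  then show ?thesis by simp
qed

locale tracking_problem = C3_time_function f + strongly_convex_time f m
  for f :: "real^'n \<Rightarrow> real \<Rightarrow> real" and m :: real +
  fixes Cxx Cxt Cxxt Cxtt Cxxx \<alpha> :: real and cubic :: bool
  assumes consts_pos: "0 < Cxx" "0 < Cxt" "0 < Cxxt" "0 < Cxtt" "0 < Cxxx"
    and bnd_xx: "\<And>x t. 0 \<le> t \<Longrightarrow> spec_norm (hess_xx f x t) \<le> Cxx"
    and bnd_xt: "\<And>x t. 0 \<le> t \<Longrightarrow> norm (grad_xt f x t) \<le> Cxt"
    and bnd_xxt: "\<And>x t. 0 \<le> t \<Longrightarrow> spec_norm (hess_xxt f x t) \<le> Cxxt"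
    and bnd_xtt: "\<And>x t. 0 \<le> t \<Longrightarrow> norm (grad_xtt f x t) \<le> Cxtt"
    and bnd_xxx: "\<And>x t i. 0 \<le> t \<Longrightarrow> spec_norm (hess_xxx f i x t) \<le> Cxxx"
    and alpha_pos: "0 < \<alpha>"
begin

definition grad_rate_bound :: "real^'n \<Rightarrow> real" where
  "grad_rate_bound v = Cxx * norm v + Cxt"

definition grad_accel_bound :: "real^'n \<Rightarrow> real" where
  "grad_accel_bound v = (Cxxx * norm1 v + 2 * Cxxt) * norm v + Cxtt"

lemma grad_rate_bound_ge: "Cxt \<le> grad_rate_bound v"
  unfolding grad_rate_bound_def using consts_pos by simp

lemma grad_accel_bound_ge: "Cxtt \<le> grad_accel_bound v"
  unfolding grad_accel_bound_def using consts_pos norm1_nonneg[of v]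
  by (simp add: mult_nonneg_nonneg)

lemma grad_rate_bound_pos: "0 < grad_rate_bound v"
  using grad_rate_bound_ge[of v] consts_pos by linarith

lemma grad_accel_bound_pos: "0 < grad_accel_bound v"
  using grad_accel_bound_ge[of v] consts_pos by linarith

lemma grad_rate_bound_le: "norm v \<le> Y \<Longrightarrow> grad_rate_bound v \<le> Cxx * Y + Cxt"
  unfolding grad_rate_bound_def using consts_pos by simp

lemma grad_accel_bound_le:
  assumes "norm (v::real^'n) \<le> Y"
  shows "grad_accel_bound v \<le> (Cxxx * (real CARD('n) * Y) + 2 * Cxxt) * Y + Cxtt"
proof -
  have "norm1 v \<le> real CARD('n) * Y"
    using norm1_le_card_mult_norm[of v] mult_left_mono[OF assms, of "real CARD('n)"] by linarith
  then show ?thesis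
    unfolding grad_accel_bound_def using assms consts_pos norm1_nonneg[of v]
    by (intro add_mono mult_mono) (auto intro: order_trans[OF norm_ge_zero])
qed

lemma norm_grad_x_line_deriv_le:
  assumes "0 \<le> u"
  shows "norm (hess_xx f y u *v v + grad_xt f y u) \<le> grad_rate_bound v"
proof -
  have "norm (hess_xx f y u *v v) \<le> Cxx * norm v"
    using norm_matrix_vector_mult_le[of "hess_xx f y u" v] bnd_xx[OF assms, of y]
    by (meson mult_right_mono norm_ge_zero order_trans)
  then show ?thesis
    using bnd_xt[OF assms, of y] norm_triangle_ineq[of "hess_xx f y u *v v" "grad_xt f y u"]
    unfolding grad_rate_bound_def by linarith
qed

lemma norm_grad_x_line_deriv2_le:
  assumes "0 \<le> u"
  shows "norm (grad_x_line_deriv2 y u v) \<le> grad_accel_bound v"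
proof -
  have "norm (v$k *\<^sub>R (hess_xxx f k y u *v v)) \<le> \<bar>v$k\<bar> * (Cxxx * norm v)" for k
    using norm_matrix_vector_mult_le[of "hess_xxx f k y u" v] bnd_xxx[OF assms, of k y]
    by (simp add: mult_left_mono mult_right_mono order_trans)
  then have "norm (\<Sum>k\<in>UNIV. v$k *\<^sub>R (hess_xxx f k y u *v v)) \<le> (\<Sum>k\<in>UNIV. \<bar>v$k\<bar> * (Cxxx * norm v))"
    by (rule order_trans[OF norm_sum sum_mono])
  also have "\<dots> = Cxxx * norm1 v * norm v"
    unfolding norm1_def by (simp add: sum_distrib_right sum_distrib_left mult_ac)
  finally have xxx: "norm (\<Sum>k\<in>UNIV. v$k *\<^sub>R (hess_xxx f k y u *v v)) \<le> Cxxx * norm1 v * norm v" .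
  have xxt: "norm (hess_xxt f y u *v v) \<le> Cxxt * norm v"
    using norm_matrix_vector_mult_le[of "hess_xxt f y u" v] bnd_xxt[OF assms, of y]
    by (meson mult_right_mono norm_ge_zero order_trans)
  show ?thesis
    using xxx xxt bnd_xtt[OF assms, of y]
      norm_triangle_ineq[of "(\<Sum>k\<in>UNIV. v$k *\<^sub>R (hess_xxx f k y u *v v)) + 2 *\<^sub>R (hess_xxt f y u *v v)"
        "grad_xtt f y u"]
      norm_triangle_ineq[of "\<Sum>k\<in>UNIV. v$k *\<^sub>R (hess_xxx f k y u *v v)" "2 *\<^sub>R (hess_xxt f y u *v v)"]
    unfolding grad_x_line_deriv2_def grad_accel_bound_def by (simp add: algebra_simps)
qed

lemma grad_x_along_traj:
  fixes xk :: "real^'n"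
  assumes tk: "0 \<le> tk"
  defines "G \<equiv> \<lambda>u. grad_x f (traj f \<alpha> xk tk u) u"
    and "G' \<equiv> \<lambda>u. hess_xx f (traj f \<alpha> xk tk u) u *v xdot f \<alpha> xk tk + grad_xt f (traj f \<alpha> xk tk u) u"
  shows "\<And>u. tk \<le> u \<Longrightarrow> (G has_vector_derivative G' u) (at u within {tk..})"
    and "\<And>u. tk \<le> u \<Longrightarrow> (G' has_vector_derivative
           grad_x_line_deriv2 (traj f \<alpha> xk tk u) u (xdot f \<alpha> xk tk)) (at u within {tk..})"
    and "\<And>u. tk \<le> u \<Longrightarrow> norm (G' u) \<le> grad_rate_bound (xdot f \<alpha> xk tk)"
    and "\<And>u. tk \<le> u \<Longrightarrow> norm (grad_x_line_deriv2 (traj f \<alpha> xk tk u) u (xdot f \<alpha> xk tk))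
           \<le> grad_accel_bound (xdot f \<alpha> xk tk)"
    and "G tk = grad_x f xk tk" "G' tk = - (\<alpha> *\<^sub>R grad_x f xk tk)"
    and "\<And>u. Vtraj f \<alpha> xk tk u = (norm (G u))\<^sup>2 / 2"
  using grad_x_along_line_has_vector_derivative[OF tk] grad_x_line_deriv_has_vector_derivative[OF tk]
    norm_grad_x_line_deriv_le norm_grad_x_line_deriv2_le hess_xx_xdot[OF tk] tk
  by (auto simp: G_def G'_def traj_def Vtraj_def Vf_def)

lemma Vtraj_le_cubic_estimate:
  assumes tk: "0 \<le> tk" and s: "0 < s"
  shows "Vtraj f \<alpha> xk tk (tk + s) \<le> (\<bar>1 - \<alpha> * s\<bar> * norm (grad_x f xk tk)
           + grad_accel_bound (xdot f \<alpha> xk tk) * s\<^sup>2)\<^sup>2 / 2"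
proof -
  note G = grad_x_along_traj[OF tk]
  let ?G = "\<lambda>u. grad_x f (traj f \<alpha> xk tk u) u"
  let ?R = "?G (tk + s) - ?G tk - s *\<^sub>R (- (\<alpha> *\<^sub>R grad_x f xk tk))"
  have R: "norm ?R \<le> grad_accel_bound (xdot f \<alpha> xk tk) * s\<^sup>2"
    using norm_first_order_remainder_le[OF s G(1,2,4)] G(6) by simp
  have "?G (tk + s) = (1 - \<alpha> * s) *\<^sub>R grad_x f xk tk + ?R"
    using G(5) by (simp add: algebra_simps)
  then have "norm (?G (tk + s)) \<le> norm ((1 - \<alpha> * s) *\<^sub>R grad_x f xk tk) + norm ?R"
    by (metis norm_triangle_ineq)
  also have "\<dots> \<le> \<bar>1 - \<alpha> * s\<bar> * norm (grad_x f xk tk) + grad_accel_bound (xdot f \<alpha> xk tk) * s\<^sup>2"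
    using R by simp
  finally show ?thesis unfolding G(7) by (simp add: power_mono divide_right_mono)
qed

lemma Vtraj_le_quadratic_estimate:
  assumes tk: "0 \<le> tk" and s: "0 < s"
  shows "Vtraj f \<alpha> xk tk (tk + s) \<le> (norm (grad_x f xk tk))\<^sup>2 / 2 - \<alpha> * (norm (grad_x f xk tk))\<^sup>2 * s
           + (norm (grad_x f xk tk) * grad_accel_bound (xdot f \<alpha> xk tk)
              + (grad_rate_bound (xdot f \<alpha> xk tk))\<^sup>2) * s\<^sup>2"
proof -
  note G = grad_x_along_traj[OF tk]
  let ?G = "\<lambda>u. grad_x f (traj f \<alpha> xk tk u) u"
  let ?G' = "\<lambda>u. hess_xx f (traj f \<alpha> xk tk u) u *v xdot f \<alpha> xk tk + grad_xt f (traj f \<alpha> xk tk u) u"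
  have "norm (?G' u - ?G' tk) \<le> grad_accel_bound (xdot f \<alpha> xk tk) * (u - tk)" if u: "tk \<le> u" for u
  proof -
    have "norm (?G' u - ?G' tk) \<le> grad_accel_bound (xdot f \<alpha> xk tk) * \<bar>u - tk\<bar>"
      by (rule norm_diff_le_of_vector_derivative_bound[where S="{tk..u}"])
         (use u in \<open>auto intro: has_vector_derivative_within_subset[OF G(2)] G(4)\<close>)
    then show ?thesis using u by simp
  qed
  from half_norm_sq_le_of_derivative_bounds[OF s G(1) G(3) this]
  show ?thesis using G(5,6) unfolding G(7) by (simp add: power2_norm_eq_inner)
qed

lemma Vtraj_start: "Vtraj f \<alpha> xk tk tk = (norm (grad_x f xk tk))\<^sup>2 / 2"
  by (simp add: Vtraj_def Vf_def traj_def)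

text \<open>With $s = t - t_k$ and $X = \|\nabla_x f(x_k,t_k)\| = \sqrt{2V(t_k)}$, both choices of
  $\phi_k$ read $\phi_k(t) = c_3 s^3 + c_2 s^2 + c_1 s - \alpha X^2$ with the coefficients below,
  evaluated at $X$, $a_k$, $b_k$.\<close>
definition phi_coeff3 :: "real \<Rightarrow> real \<Rightarrow> real \<Rightarrow> real" where
  "phi_coeff3 X a b = (if cubic then 1/2 * b\<^sup>2 else 0)"

definition phi_coeff2 :: "real \<Rightarrow> real \<Rightarrow> real \<Rightarrow> real" where
  "phi_coeff2 X a b = (if cubic then 3/2 * \<alpha> * X * b else 1/2 * a * b)"

definition phi_coeff1 :: "real \<Rightarrow> real \<Rightarrow> real \<Rightarrow> real" where
  "phi_coeff1 X a b = (if cubic then X * b + \<alpha>\<^sup>2 * X\<^sup>2 else a\<^sup>2 + b * X)"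

lemma phi_eq_coeffs:
  fixes xk :: "real^'n" and tk :: real
  defines "X \<equiv> norm (grad_x f xk tk)" and "a \<equiv> grad_rate_bound (xdot f \<alpha> xk tk)"
    and "b \<equiv> grad_accel_bound (xdot f \<alpha> xk tk)"
  shows "phi cubic Cxx Cxt Cxxx Cxxt Cxtt \<alpha> f xk tk t = phi_coeff3 X a b * (t - tk)^3
           + phi_coeff2 X a b * (t - tk)\<^sup>2 + phi_coeff1 X a b * (t - tk) - \<alpha> * X\<^sup>2"
proof -
  have "sqrt (2 * Vtraj f \<alpha> xk tk tk) = X" unfolding Vtraj_start X_def by simp
  then show ?thesis
    unfolding phi_def Let_def phi_coeff3_def phi_coeff2_def phi_coeff1_def
      a_def b_def grad_rate_bound_def grad_accel_bound_def
    by (simp add: Vtraj_start X_def power2_eq_square)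
qed

lemma phi_coeffs_nonneg:
  "0 \<le> X \<Longrightarrow> 0 \<le> a \<Longrightarrow> 0 \<le> b \<Longrightarrow>
     0 \<le> phi_coeff3 X a b \<and> 0 \<le> phi_coeff2 X a b \<and> 0 \<le> phi_coeff1 X a b"
  unfolding phi_coeff3_def phi_coeff2_def phi_coeff1_def using alpha_pos by simp

lemma phi_coeff1_pos: "0 < X \<Longrightarrow> 0 < a \<Longrightarrow> 0 < b \<Longrightarrow> 0 < phi_coeff1 X a b"
  unfolding phi_coeff1_def using alpha_pos by (simp add: add_pos_pos)

lemma phi_coeffs_mono:
  assumes "0 \<le> X" "X \<le> X'" "0 \<le> a" "a \<le> a'" "0 \<le> b" "b \<le> b'"
  shows "phi_coeff3 X a b \<le> phi_coeff3 X' a' b' \<and> phi_coeff2 X a b \<le> phi_coeff2 X' a' b'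
           \<and> phi_coeff1 X a b \<le> phi_coeff1 X' a' b'"
  unfolding phi_coeff3_def phi_coeff2_def phi_coeff1_def using assms alpha_pos
  by (auto intro!: add_mono mult_mono power_mono)

definition next_time :: "real^'n \<Rightarrow> real \<Rightarrow> real" where
  "next_time xk tk = Inf {t. tk < t \<and> phi cubic Cxx Cxt Cxxx Cxxt Cxtt \<alpha> f xk tk t = 0}"

lemma next_time_root:
  assumes V: "0 < Vtraj f \<alpha> xk tk tk"
  shows "tk < next_time xk tk"
    and "phi cubic Cxx Cxt Cxxx Cxxt Cxtt \<alpha> f xk tk (next_time xk tk) = 0"
proof -
  let ?X = "norm (grad_x f xk tk)"
  let ?a = "grad_rate_bound (xdot f \<alpha> xk tk)" and ?b = "grad_accel_bound (xdot f \<alpha> xk tk)"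
  have X: "0 < ?X" using V unfolding Vtraj_start by (simp add: zero_less_norm_iff)
  have "0 < \<alpha> * ?X\<^sup>2" using X alpha_pos by simp
  moreover note phi_coeffs_nonneg[OF norm_ge_zero less_imp_le[OF grad_rate_bound_pos]
      less_imp_le[OF grad_accel_bound_pos], of "grad_x f xk tk" "xdot f \<alpha> xk tk" "xdot f \<alpha> xk tk"]
  ultimately show "tk < next_time xk tk" "phi cubic Cxx Cxt Cxxx Cxxt Cxtt \<alpha> f xk tk (next_time xk tk) = 0"
    using Inf_positive_roots_cubic[OF _ _ phi_coeff1_pos[OF X grad_rate_bound_pos grad_accel_bound_pos]
        _ phi_eq_coeffs]
    unfolding next_time_def by auto
qed

lemma next_time_step_root:
  fixes xk :: "real^'n" and tk :: real
  assumes V: "0 < Vtraj f \<alpha> xk tk tk"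
  defines "X \<equiv> norm (grad_x f xk tk)" and "a \<equiv> grad_rate_bound (xdot f \<alpha> xk tk)"
    and "b \<equiv> grad_accel_bound (xdot f \<alpha> xk tk)" and "s \<equiv> next_time xk tk - tk"
  shows "0 < s" and "phi_coeff3 X a b * s^3 + phi_coeff2 X a b * s\<^sup>2 + phi_coeff1 X a b * s = \<alpha> * X\<^sup>2"
proof -
  show "0 < s" using next_time_root(1)[OF V] unfolding s_def by simp
  have "next_time xk tk = tk + s" unfolding s_def by simp
  then show "phi_coeff3 X a b * s^3 + phi_coeff2 X a b * s\<^sup>2 + phi_coeff1 X a b * s = \<alpha> * X\<^sup>2"
    using next_time_root(2)[OF V] unfolding phi_eq_coeffs X_def a_def b_def by simp
qed

lemma Vtraj_next_time_le:
  fixes xk :: "real^'n"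
  assumes tk: "0 \<le> tk" and V: "0 < Vtraj f \<alpha> xk tk tk"
  defines "s \<equiv> next_time xk tk - tk"
  shows "Vtraj f \<alpha> xk tk (next_time xk tk) \<le> Vtraj f \<alpha> xk tk tk
           - (if cubic then \<alpha>\<^sup>2 * Vtraj f \<alpha> xk tk tk * s\<^sup>2
              else 1/2 * grad_rate_bound (xdot f \<alpha> xk tk) * grad_accel_bound (xdot f \<alpha> xk tk) * s^3)"
proof -
  let ?X = "norm (grad_x f xk tk)"
  let ?a = "grad_rate_bound (xdot f \<alpha> xk tk)" and ?b = "grad_accel_bound (xdot f \<alpha> xk tk)"
  note s = next_time_step_root(1)[OF V, folded s_def]
  note root = next_time_step_root(2)[OF V, folded s_def, unfolded phi_coeff3_def phi_coeff2_def phi_coeff1_def]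
  have next_eq: "next_time xk tk = tk + s" unfolding s_def by simp
  show ?thesis
  proof (cases cubic)
    case True
    have "Vtraj f \<alpha> xk tk (tk + s) \<le> (\<bar>1 - \<alpha> * s\<bar> * ?X + ?b * s\<^sup>2)\<^sup>2 / 2"
      by (rule Vtraj_le_cubic_estimate[OF tk s])
    also have "\<dots> \<le> ?X\<^sup>2 / 2 - \<alpha>\<^sup>2 * (?X\<^sup>2 / 2) * s\<^sup>2"
      using root True grad_accel_bound_pos
      by (intro cubic_root_bound s alpha_pos norm_ge_zero less_imp_le) simp_all
    finally show ?thesis using True unfolding next_eq Vtraj_start by simp
  next
    case False
    have "Vtraj f \<alpha> xk tk (tk + s) \<le> ?X\<^sup>2 / 2 - \<alpha> * ?X\<^sup>2 * s + (?X * ?b + ?a\<^sup>2) * s\<^sup>2"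
      by (rule Vtraj_le_quadratic_estimate[OF tk s])
    also have "\<dots> = ?X\<^sup>2 / 2 - 1/2 * ?a * ?b * s^3"
      using root False by (intro quadratic_root_bound) simp
    finally show ?thesis using False unfolding next_eq Vtraj_start by simp
  qed
qed

lemma Vtraj_next_time_less:
  assumes tk: "0 \<le> tk" and V: "0 < Vtraj f \<alpha> xk tk tk"
  shows "Vtraj f \<alpha> xk tk (next_time xk tk) < Vtraj f \<alpha> xk tk tk"
proof -
  define s where "s = next_time xk tk - tk"
  have "0 < s" using next_time_step_root(1)[OF V] unfolding s_def .
  then have "0 < (if cubic then \<alpha>\<^sup>2 * Vtraj f \<alpha> xk tk tk * s\<^sup>2
      else 1/2 * grad_rate_bound (xdot f \<alpha> xk tk) * grad_accel_bound (xdot f \<alpha> xk tk) * s^3)"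
    using V alpha_pos grad_rate_bound_pos grad_accel_bound_pos by simp
  then show ?thesis using Vtraj_next_time_le[OF tk V] unfolding s_def by linarith
qed

definition xdot_bound :: "real \<Rightarrow> real" where
  "xdot_bound M = (\<alpha> * sqrt (2 * M) + Cxt) / m"

lemma norm_xdot_le_xdot_bound:
  assumes tk: "0 \<le> tk" and V: "Vtraj f \<alpha> xk tk tk \<le> M"
  shows "norm (xdot f \<alpha> xk tk) \<le> xdot_bound M"
proof -
  have "norm (grad_x f xk tk) \<le> sqrt (2 * M)" using V by (simp add: Vtraj_start real_le_rsqrt)
  then have "\<bar>\<alpha>\<bar> * norm (grad_x f xk tk) + norm (grad_xt f xk tk) \<le> \<alpha> * sqrt (2 * M) + Cxt"
    using bnd_xt[OF tk] alpha_pos by (intro add_mono) auto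
  then show ?thesis
    using norm_xdot_le[OF tk] m_pos unfolding xdot_bound_def by (meson divide_right_mono less_imp_le order_trans)
qed

lemma next_time_step_lower_bound:
  assumes L: "0 < L" "L \<le> M"
  obtains \<sigma> where "0 < \<sigma>"
    and "\<And>xk tk. 0 \<le> tk \<Longrightarrow> L \<le> Vtraj f \<alpha> xk tk tk \<Longrightarrow> Vtraj f \<alpha> xk tk tk \<le> M \<Longrightarrow>
           \<sigma> \<le> next_time xk tk - tk"
proof -
  define Xm where "Xm = sqrt (2 * M)"
  define Am where "Am = Cxx * xdot_bound M + Cxt"
  define Bm where "Bm = (Cxxx * (real CARD('n) * xdot_bound M) + 2 * Cxxt) * xdot_bound M + Cxtt"
  define K where "K = phi_coeff3 Xm Am Bm + phi_coeff2 Xm Am Bm + phi_coeff1 Xm Am Bm"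
  have Xm: "0 < Xm" using L unfolding Xm_def by simp
  have "0 \<le> xdot_bound M" using Xm alpha_pos consts_pos m_pos unfolding xdot_bound_def Xm_def by simp
  then have Am: "0 < Am" and Bm: "0 < Bm"
    unfolding Am_def Bm_def using consts_pos by (auto intro!: add_nonneg_pos mult_nonneg_nonneg)
  have K: "0 < K"
    unfolding K_def using phi_coeffs_nonneg[of Xm Am Bm] phi_coeff1_pos[OF Xm Am Bm] Xm Am Bm by simp
  show ?thesis
  proof (rule that)
    show "0 < min 1 (2 * \<alpha> * L / K)" using L K alpha_pos by simp
  next
    fix xk tk assume tk: "0 \<le> tk" and V: "L \<le> Vtraj f \<alpha> xk tk tk" "Vtraj f \<alpha> xk tk tk \<le> M"
    let ?X = "norm (grad_x f xk tk)" and ?xd = "xdot f \<alpha> xk tk"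
    have V0: "0 < Vtraj f \<alpha> xk tk tk" using L V by simp
    have X: "?X \<le> Xm" unfolding Xm_def using V by (simp add: Vtraj_start real_le_rsqrt)
    note xd = norm_xdot_le_xdot_bound[OF tk V(2)]
    note mono = phi_coeffs_mono[OF norm_ge_zero X less_imp_le[OF grad_rate_bound_pos]
        grad_rate_bound_le[OF xd, folded Am_def] less_imp_le[OF grad_accel_bound_pos]
        grad_accel_bound_le[OF xd, folded Bm_def]]
    note nonneg = phi_coeffs_nonneg[OF norm_ge_zero less_imp_le[OF grad_rate_bound_pos]
        less_imp_le[OF grad_accel_bound_pos]]
    have "2 * \<alpha> * L \<le> \<alpha> * ?X\<^sup>2" using V alpha_pos unfolding Vtraj_start by simp
    then show "min 1 (2 * \<alpha> * L / K) \<le> next_time xk tk - tk"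
      unfolding K_def using mono nonneg K[unfolded K_def]
      by (intro root_lower_bound[OF next_time_step_root(1)[OF V0] _ _ _ _ _ _
            next_time_step_root(2)[OF V0]]) auto
  qed
qed

lemma Vtraj_next_time_uniform_decrease:
  assumes L: "0 < L" "L \<le> M"
  obtains c where "0 < c"
    and "\<And>xk tk. 0 \<le> tk \<Longrightarrow> L \<le> Vtraj f \<alpha> xk tk tk \<Longrightarrow> Vtraj f \<alpha> xk tk tk \<le> M \<Longrightarrow>
           Vtraj f \<alpha> xk tk (next_time xk tk) \<le> Vtraj f \<alpha> xk tk tk - c"
proof -
  obtain \<sigma> where \<sigma>: "0 < \<sigma>"
    and step: "\<And>xk tk. 0 \<le> tk \<Longrightarrow> L \<le> Vtraj f \<alpha> xk tk tk \<Longrightarrow> Vtraj f \<alpha> xk tk tk \<le> M \<Longrightarrow>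
                 \<sigma> \<le> next_time xk tk - tk"
    using next_time_step_lower_bound[OF L] by blast
  show ?thesis
  proof (rule that)
    show "0 < (if cubic then \<alpha>\<^sup>2 * L * \<sigma>\<^sup>2 else 1/2 * Cxt * Cxtt * \<sigma>^3)"
      using \<sigma> L alpha_pos consts_pos by simp
  next
    fix xk tk assume tk: "0 \<le> tk" and V: "L \<le> Vtraj f \<alpha> xk tk tk" "Vtraj f \<alpha> xk tk tk \<le> M"
    define s where "s = next_time xk tk - tk"
    define V0 where "V0 = Vtraj f \<alpha> xk tk tk"
    define a where "a = grad_rate_bound (xdot f \<alpha> xk tk)"
    define b where "b = grad_accel_bound (xdot f \<alpha> xk tk)"
    have s: "\<sigma> \<le> s" unfolding s_def using step[OF tk V] .
    have ab: "Cxt \<le> a" "Cxtt \<le> b" unfolding a_def b_def by (rule grad_rate_bound_ge grad_accel_bound_ge)+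
    have "(if cubic then \<alpha>\<^sup>2 * L * \<sigma>\<^sup>2 else 1/2 * Cxt * Cxtt * \<sigma>^3)
        \<le> (if cubic then \<alpha>\<^sup>2 * V0 * s\<^sup>2 else 1/2 * a * b * s^3)"
      using s ab \<sigma> V L consts_pos unfolding V0_def
      by (auto intro!: mult_mono power_mono)
    moreover have "Vtraj f \<alpha> xk tk (next_time xk tk)
        \<le> V0 - (if cubic then \<alpha>\<^sup>2 * V0 * s\<^sup>2 else 1/2 * a * b * s^3)"
      using Vtraj_next_time_le[OF tk] V L unfolding s_def V0_def a_def b_def by simp
    ultimately show "Vtraj f \<alpha> xk tk (next_time xk tk)
        \<le> Vtraj f \<alpha> xk tk tk - (if cubic then \<alpha>\<^sup>2 * L * \<sigma>\<^sup>2 else 1/2 * Cxt * Cxtt * \<sigma>^3)"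
      unfolding V0_def by linarith
  qed
qed

end

theorem theorem1:
  fixes f :: "real^'n \<Rightarrow> real \<Rightarrow> real"
    and m Cxx Cxt Cxxt Cxtt Cxxx \<alpha> :: real
    and cubic :: bool
    and x0 :: "real^'n"
    and xs :: "nat \<Rightarrow> real^'n" and ts :: "nat \<Rightarrow> real"
  assumes smooth: "C3_time f"
    and m_pos: "m > 0"
    and strong_convex: "\<forall>x t. 0 \<le> t \<longrightarrow> psd (hess_xx f x t - m *\<^sub>R mat 1)"
    and consts_pos: "Cxx > 0" "Cxt > 0" "Cxxt > 0" "Cxtt > 0" "Cxxx > 0"
    and bnd_xx: "\<forall>x t. 0 \<le> t \<longrightarrow> spec_norm (hess_xx f x t) \<le> Cxx"
    and bnd_xt: "\<forall>x t. 0 \<le> t \<longrightarrow> norm (grad_xt f x t) \<le> Cxt"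
    and bnd_xxt: "\<forall>x t. 0 \<le> t \<longrightarrow> spec_norm (hess_xxt f x t) \<le> Cxxt"
    and bnd_xtt: "\<forall>x t. 0 \<le> t \<longrightarrow> norm (grad_xtt f x t) \<le> Cxtt"
    and bnd_xxx: "\<forall>x t i. 0 \<le> t \<longrightarrow> spec_norm (hess_xxx f i x t) \<le> Cxxx"
    and alpha_pos: "\<alpha> > 0"
    and t0: "ts 0 = 0" and x_init: "xs 0 = x0"
    and t_step: "\<forall>k. ts (Suc k) =
        Inf {t. ts k < t \<and> phi cubic Cxx Cxt Cxxx Cxxt Cxtt \<alpha> f (xs k) (ts k) t = 0}"
    and x_step: "\<forall>k. xs (Suc k) = xs k + (ts (Suc k) - ts k) *\<^sub>R xdot f \<alpha> (xs k) (ts k)"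
    and V_pos: "\<forall>k. Vtraj f \<alpha> (xs k) (ts k) (ts k) > 0"
  shows "(\<forall>k. Vtraj f \<alpha> (xs k) (ts k) (ts (Suc k)) < Vtraj f \<alpha> (xs k) (ts k) (ts k))
         \<and> (\<lambda>k. Vtraj f \<alpha> (xs k) (ts k) (ts k)) \<longlonglongrightarrow> 0"
proof -
  interpret tracking_problem f m Cxx Cxt Cxxt Cxtt Cxxx \<alpha> cubic
    using assms by unfold_locales auto
  have next_ts: "ts (Suc k) = next_time (xs k) (ts k)" for k
    using t_step by (simp add: next_time_def)
  have V_Suc: "Vtraj f \<alpha> (xs (Suc k)) (ts (Suc k)) (ts (Suc k))
      = Vtraj f \<alpha> (xs k) (ts k) (next_time (xs k) (ts k))" for k
    using x_step by (simp add: Vtraj_def traj_def next_ts)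
  have ts_nonneg: "0 \<le> ts k" for k
  proof (induction k)
    case (Suc k)
    then show ?case using next_time_root(1)[of "xs k" "ts k"] V_pos next_ts by force
  qed (simp add: t0)
  have decrease: "Vtraj f \<alpha> (xs k) (ts k) (next_time (xs k) (ts k)) < Vtraj f \<alpha> (xs k) (ts k) (ts k)" for k
    using Vtraj_next_time_less[OF ts_nonneg] V_pos by simp
  moreover have "(\<lambda>k. Vtraj f \<alpha> (xs k) (ts k) (ts k)) \<longlonglongrightarrow> 0"
  proof (rule LIMSEQ_zero_of_uniform_decrease)
    show "0 \<le> Vtraj f \<alpha> (xs k) (ts k) (ts k)" for k using V_pos by (simp add: less_imp_le)
    show "Vtraj f \<alpha> (xs (Suc k)) (ts (Suc k)) (ts (Suc k)) \<le> Vtraj f \<alpha> (xs k) (ts k) (ts k)" for k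
      using decrease[of k] unfolding V_Suc by simp
  next
    fix r M :: real assume rM: "0 < r" "r \<le> M"
    obtain c where c: "0 < c" and dec: "\<And>xk tk. 0 \<le> tk \<Longrightarrow> r \<le> Vtraj f \<alpha> xk tk tk \<Longrightarrow>
        Vtraj f \<alpha> xk tk tk \<le> M \<Longrightarrow> Vtraj f \<alpha> xk tk (next_time xk tk) \<le> Vtraj f \<alpha> xk tk tk - c"
      using Vtraj_next_time_uniform_decrease[OF rM] by blast
    have "Vtraj f \<alpha> (xs (Suc k)) (ts (Suc k)) (ts (Suc k)) \<le> Vtraj f \<alpha> (xs k) (ts k) (ts k) - c"
      if "r \<le> Vtraj f \<alpha> (xs k) (ts k) (ts k)" "Vtraj f \<alpha> (xs k) (ts k) (ts k) \<le> M" for k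
      unfolding V_Suc by (rule dec[OF ts_nonneg that])
    then show "\<exists>c>0. \<forall>k. r \<le> Vtraj f \<alpha> (xs k) (ts k) (ts k) \<longrightarrow> Vtraj f \<alpha> (xs k) (ts k) (ts k) \<le> M
        \<longrightarrow> Vtraj f \<alpha> (xs (Suc k)) (ts (Suc k)) (ts (Suc k)) \<le> Vtraj f \<alpha> (xs k) (ts k) (ts k) - c"
      using c by blast
  qed
  ultimately show ?thesis by (simp add: next_ts)
qed

end
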